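(* For all $1\le r\le n$ and $1\le k\le r$ one has $\partial_r\big(M_r^{(k)}\big)\subseteq M_{r-1}^{(k-1)}$, where $M_{r-1}^{(0)}:=0$. Moreover $M_r=\bigoplus_{k=1}^r M_r^{(k)}$, so the complex $(M_*,\partial_* )$ splits as the direct sum over $k=1,\dots,n$ of the subcomplexes $C^{(k)}:\ 0\to M_n^{(k)}\to M_{n-1}^{(k-1)}\to\cdots\to M_{n-k+1}^{(1)}\to 0.$
   Context: Fix $n\ge1$. For $0\le r\le n$, $M_r$ is the complex vector space with basis the injective words $a_1\cdots a_r$ of length $r$ on the alphabet $\{1,\dots,n\}$ (distinct letters), and $\partial_r:M_r\to M_{r-1}$ is $\partial_r(a_1\cdots a_r)=\sum_{j=1}^r(-1)^{j-1}a_1\cdots\widehat{a_j}\cdots a_r$. For $S\subseteq\{1,\dots,n\}$ with $|S|=r$, $M_S\subseteq M_r$ is the span of injective words whose set of letters is $S$. The symmetric group $S_r$ acts on $M_S$ by permuting positions: $\pi\cdot(w_1\cdots w_r)=w_{\pi(1)}w_{\pi(2)}\cdots w_{\pi(r)}$, extended linearly to $\mathbb{C}S_r$ (product in $\mathbb{C}S_r$ is composition). Let $e_r^{(k)}\in\mathbb{C}S_r$ ($1\le k\le r$) be the Eulerian idempotents: with permutations identified with one-line words, $S(r;k)$ the permutations of $S_r$ with exactly $k-1$ descents, $l_r^{(k)}=(-1)^{k-1}\sum_{\sigma\in S(r;k)}\mathrm{sgn}(\sigma)\sigma$, $\lambda_r^{(k)}=\sum_{t=0}^{k-1}(-1)^t\binom{r+t}{t}l_r^{(k-t)}$,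 the $e_r^{(j)}$ are defined by $(-1)^{k-1}\lambda_r^{(k)}=\sum_{j=1}^r k^je_r^{(j)}$ for all $k\ge1$. They are pairwise orthogonal idempotents summing to the identity. Set $M_S^{(k)}=e_r^{(k)}\cdot M_S$ and $M_r^{(k)}=\bigoplus_{|S|=r}M_S^{(k)}$. *)

theory Defs
  imports Complex_Main "HOL-Combinatorics.Combinatorics"
begin

definition inj_words :: "nat \<Rightarrow> nat \<Rightarrow> nat list set" where
  "inj_words n r = {w. distinct w \<and> set w \<subseteq> {1..n} \<and> length w = r}"

definition M :: "nat \<Rightarrow> nat \<Rightarrow> (nat list \<Rightarrow> complex) set" where
  "M n r = {f. \<forall>w. f w \<noteq> 0 \<longrightarrow> w \<in> inj_words n r}"

definition MS :: "nat set \<Rightarrow> (nat list \<Rightarrow> complex) set" where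
  "MS S = {f. \<forall>w. f w \<noteq> 0 \<longrightarrow> distinct w \<and> set w = S}"

definition del_at :: "nat \<Rightarrow> nat list \<Rightarrow> nat list" where
  "del_at j w = take j w @ drop (Suc j) w"

text \<open>Boundary map; position j (0-based) carries sign (-1)^j, i.e. (-1)^(j-1) for 1-based j.\<close>
definition bd :: "nat \<Rightarrow> nat \<Rightarrow> (nat list \<Rightarrow> complex) \<Rightarrow> (nat list \<Rightarrow> complex)" where
  "bd n r f = (\<lambda>v. \<Sum>w\<in>inj_words n r. f w * (\<Sum>j<r. if del_at j w = v then (-1) ^ j else 0))"

definition perm_word :: "(nat \<Rightarrow> nat) \<Rightarrow> nat list \<Rightarrow> nat list" where
  "perm_word \<sigma> w = map (\<lambda>i. w ! \<sigma> i) [0..<length w]"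

text \<open>Elements of C S_r: coefficient functions on permutations of {0..<r}.
  Linear action of such an element on a vector of M_r.\<close>
definition act :: "nat \<Rightarrow> nat \<Rightarrow> ((nat \<Rightarrow> nat) \<Rightarrow> complex) \<Rightarrow> (nat list \<Rightarrow> complex) \<Rightarrow> (nat list \<Rightarrow> complex)" where
  "act n r e f = (\<lambda>v. \<Sum>\<sigma>\<in>{\<sigma>. \<sigma> permutes {..<r}}. e \<sigma> *
      (\<Sum>w\<in>inj_words n r. if perm_word \<sigma> w = v then f w else 0))"

definition descents :: "nat \<Rightarrow> (nat \<Rightarrow> nat) \<Rightarrow> nat" where
  "descents r \<sigma> = card {i. Suc i < r \<and> \<sigma> (Suc i) < \<sigma> i}"

definition eul_l :: "nat \<Rightarrow> nat \<Rightarrow> (nat \<Rightarrow> nat) \<Rightarrow> complex" where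
  "eul_l r k \<sigma> = (if \<sigma> permutes {..<r} \<and> descents r \<sigma> = k - 1
      then (-1) ^ (k - 1) * of_int (sign \<sigma>) else 0)"

definition eul_lambda :: "nat \<Rightarrow> nat \<Rightarrow> (nat \<Rightarrow> nat) \<Rightarrow> complex" where
  "eul_lambda r k \<sigma> = (\<Sum>t=0..k-1. (-1) ^ t * of_nat ((r + t) choose t) * eul_l r (k - t) \<sigma>)"

definition euler_e :: "nat \<Rightarrow> nat \<Rightarrow> (nat \<Rightarrow> nat) \<Rightarrow> complex" where
  "euler_e r = (THE e. (\<forall>j. j \<notin> {1..r} \<longrightarrow> e j = (\<lambda>\<sigma>. 0)) \<and>
      (\<forall>k::nat. k \<ge> 1 \<longrightarrow>
         (\<lambda>\<sigma>. (-1) ^ (k - 1) * eul_lambda r k \<sigma>) = (\<lambda>\<sigma>. \<Sum>j=1..r. of_nat k ^ j * e j \<sigma>)))"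

definition MSk :: "nat \<Rightarrow> nat \<Rightarrow> nat \<Rightarrow> nat set \<Rightarrow> (nat list \<Rightarrow> complex) set" where
  "MSk n r k S = act n r (euler_e r k) ` MS S"

text \<open>M_r^(k) = sum over |S| = r of M_S^(k) (direct, supports disjoint); M_r^(0) = 0.\<close>
definition Mk :: "nat \<Rightarrow> nat \<Rightarrow> nat \<Rightarrow> (nat list \<Rightarrow> complex) set" where
  "Mk n r k = (if k = 0 then {\<lambda>_. 0} else
     {f. \<exists>g. (\<forall>S. S \<subseteq> {1..n} \<and> card S = r \<longrightarrow> g S \<in> MSk n r k S) \<and>
          f = (\<lambda>v. \<Sum>S\<in>{S. S \<subseteq> {1..n} \<and> card S = r}. g S v)})"

end

theory Submission
  imports Defs "HOL-Computational_Algebra.Polynomial"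
begin

text \<open>For \<open>k \<ge> 1\<close> let \<open>\<psi>_k = (-1)^(k-1) \<lambda>_r^(k)\<close>, so that \<open>\<psi>_k = \<Sum>_j k^j e_r^(j)\<close>.
  Counting the colourings \<open>c : [r] \<rightarrow> [k]\<close> whose stable sorting permutation \<open>\<sigma>_c\<close> is a given
  permutation shows that \<open>\<psi>_k\<close> acts on words as the signed shuffle \<open>\<Sum>_c sign \<sigma>_c \<sigma>_c\<close>.
  Refining a colouring by a colouring of its ranks gives \<open>\<psi>_k \<psi>_m = \<psi>_(km)\<close>, and deleting one
  letter of a coloured word gives \<open>\<partial> \<psi>_m = m \<psi>_m \<partial>\<close>. Comparing coefficients of these polynomial
  identities in \<open>k\<close> and \<open>m\<close> shows that the \<open>e_r^(j)\<close> are orthogonal idempotents with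
  \<open>\<partial> e_r^(k) = e_(r-1)^(k-1) \<partial>\<close>, and \<open>\<psi>_1 = 1\<close> gives \<open>\<Sum>_j e_r^(j) = 1\<close>.\<close>

section \<open>Inversions and the sign of a permutation\<close>

definition inversions :: "nat \<Rightarrow> (nat \<Rightarrow> nat) \<Rightarrow> (nat \<times> nat) set" where
  "inversions r f = {(x, y). x < y \<and> y < r \<and> f y < f x}"

lemma finite_inversions: "finite (inversions r f)"
  by (rule finite_subset[of _ "{..<r} \<times> {..<r}"]) (auto simp: inversions_def)

lemma permutes_less: "s permutes {..<r} \<Longrightarrow> i < r \<Longrightarrow> s i < r"
  by (metis lessThan_iff permutes_in_image)

lemma permutes_ascending_eq_id:
  assumes s: "s permutes {..<r}" and asc: "\<And>i. Suc i < r \<Longrightarrow> s i < s (Suc i)"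
  shows "s = id"
proof
  have shift: "s i + t \<le> s (i + t)" if "i + t < r" for i t
    using that
  proof (induction t)
    case (Suc t)
    then show ?case using asc[of "i + t"] by fastforce
  qed simp
  fix i
  show "s i = id i"
  proof (cases "i < r")
    case True
    have "s 0 + i \<le> s i" using shift[of 0 i] True by simp
    moreover have "s i + (r - 1 - i) \<le> s (r - 1)" using shift[of i "r - 1 - i"] True by simp
    moreover have "s (r - 1) < r" using permutes_less[OF s] True by simp
    ultimately show ?thesis by simp
  next
    case False
    then show ?thesis using s by (simp add: permutes_def)
  qed
qed

lemma card_inversions_swap_descent:
  assumes i: "Suc i < r" and d: "s (Suc i) < s i"
  shows "card (inversions r (s \<circ> transpose i (Suc i))) = card (inversions r s) - 1"
proof -
  let ?t = "transpose i (Suc i)"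
  let ?f = "\<lambda>(x, y). (?t x, ?t y)"
  have t_less: "?t x < ?t y" if "x < y" "(x, y) \<noteq> (i, Suc i)" for x y
    using that unfolding transpose_def by (auto split: if_splits)
  have t_bound: "?t y < r" if "y < r" for y
    using that i by (auto simp: transpose_def)
  have "bij_betw ?f (inversions r s - {(i, Suc i)}) (inversions r (s \<circ> ?t))"
  proof (rule bij_betw_byWitness[where f' = ?f])
    show "\<forall>a\<in>inversions r s - {(i, Suc i)}. ?f (?f a) = a" by auto
    show "\<forall>a'\<in>inversions r (s \<circ> ?t). ?f (?f a') = a'" by auto
    show "?f ` (inversions r s - {(i, Suc i)}) \<subseteq> inversions r (s \<circ> ?t)"
    proof (clarsimp simp: inversions_def)
      fix x y assume "x < y" "y < r" "s y < s x" "x = i \<longrightarrow> y \<noteq> Suc i"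
      then show "?t x < ?t y \<and> ?t y < r" using t_less[of x y] t_bound by auto
    qed
    show "?f ` inversions r (s \<circ> ?t) \<subseteq> inversions r s - {(i, Suc i)}"
    proof (clarsimp simp: inversions_def)
      fix x y assume h: "x < y" "y < r" "s (?t y) < s (?t x)"
      have ne: "(?t x, ?t y) \<noteq> (i, Suc i)"
      proof
        assume "(?t x, ?t y) = (i, Suc i)"
        then have "x = Suc i" "y = i" by (auto simp: transpose_def split: if_splits)
        then show False using h by simp
      qed
      have "(x, y) \<noteq> (i, Suc i)" using h d by auto
      then show "?t x < ?t y \<and> ?t y < r \<and> (?t x = i \<longrightarrow> ?t y \<noteq> Suc i)"
        using t_less[of x y] t_bound h ne by auto
    qed
  qed
  then have "card (inversions r (s \<circ> ?t)) = card (inversions r s - {(i, Suc i)})"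
    by (simp add: bij_betw_same_card)
  also have "\<dots> = card (inversions r s) - 1"
    using i d finite_inversions by (simp add: inversions_def)
  finally show ?thesis .
qed

lemma sign_eq_inversions:
  "s permutes {..<r} \<Longrightarrow> sign s = (-1) ^ card (inversions r s)"
proof (induction "card (inversions r s)" arbitrary: s rule: less_induct)
  case less
  show ?case
  proof (cases "\<forall>i. Suc i < r \<longrightarrow> s i < s (Suc i)")
    case True
    then have "s = id" using permutes_ascending_eq_id less.prems by blast
    then have "inversions r s = {}" by (auto simp: inversions_def)
    then show ?thesis using \<open>s = id\<close> by simp
  next
    case False
    then obtain i where i: "Suc i < r" and "\<not> s i < s (Suc i)" by blast
    moreover have "s i \<noteq> s (Suc i)"
      using permutes_inj[OF less.prems] by (metis inj_eq n_not_Suc_n)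
    ultimately have d: "s (Suc i) < s i" by simp
    let ?t = "transpose i (Suc i)"
    have "(i, Suc i) \<in> inversions r s" using i d by (simp add: inversions_def)
    then have pos: "card (inversions r s) > 0"
      using finite_inversions card_gt_0_iff by blast
    have p: "s \<circ> ?t permutes {..<r}"
      by (rule permutes_compose[OF _ less.prems]) (rule permutes_swap_id, use i in auto)
    have IH: "sign (s \<circ> ?t) = (-1) ^ card (inversions r (s \<circ> ?t))"
      using less.hyps[OF _ p] card_inversions_swap_descent[OF i d] pos by simp
    have "sign s = - sign (s \<circ> ?t)"
      using sign_compose[of s ?t] permutes_imp_permutation[OF finite_lessThan less.prems]
      by (simp add: sign_swap_id permutation_swap_id)
    also have "\<dots> = (-1) ^ Suc (card (inversions r (s \<circ> ?t)))"
      by (simp add: IH)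
    also have "Suc (card (inversions r (s \<circ> ?t))) = card (inversions r s)"
      using card_inversions_swap_descent[OF i d] pos by simp
    finally show ?thesis .
  qed
qed

section \<open>Standardization of colourings\<close>

definition colourings :: "nat \<Rightarrow> nat \<Rightarrow> (nat \<Rightarrow> nat) set" where
  "colourings r k = Pi\<^sub>E {..<r} (\<lambda>_. {..<k})"

lemma finite_colourings: "finite (colourings r k)"
  unfolding colourings_def by (rule finite_PiE) auto

lemma colouringsI:
  "(\<And>p. p < r \<Longrightarrow> c p < k) \<Longrightarrow> (\<And>p. \<not> p < r \<Longrightarrow> c p = undefined) \<Longrightarrow> c \<in> colourings r k"
  unfolding colourings_def PiE_iff extensional_def by auto

lemma colouringsD:
  "c \<in> colourings r k \<Longrightarrow> p < r \<Longrightarrow> c p < k"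
  "c \<in> colourings r k \<Longrightarrow> \<not> p < r \<Longrightarrow> c p = undefined"
  unfolding colourings_def PiE_iff extensional_def by auto

definition col_less :: "(nat \<Rightarrow> nat) \<Rightarrow> nat \<Rightarrow> nat \<Rightarrow> bool" where
  "col_less c q p \<longleftrightarrow> c q < c p \<or> (c q = c p \<and> q < p)"

definition col_rank :: "nat \<Rightarrow> (nat \<Rightarrow> nat) \<Rightarrow> nat \<Rightarrow> nat" where
  "col_rank r c p = (if p < r then card {q. q < r \<and> col_less c q p} else p)"

text \<open>\<^term>\<open>col_sort r c\<close> lists the positions by increasing colour, ties by increasing position:
  it is the permutation \<open>\<sigma>_c\<close> of the signed shuffle.\<close>
definition col_sort :: "nat \<Rightarrow> (nat \<Rightarrow> nat) \<Rightarrow> nat \<Rightarrow> nat" where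
  "col_sort r c = inv (col_rank r c)"

lemma col_less_trans: "col_less c a b \<Longrightarrow> col_less c b d \<Longrightarrow> col_less c a d"
  and col_less_irrefl: "\<not> col_less c a a"
  and col_less_asym: "col_less c a b \<Longrightarrow> \<not> col_less c b a"
  and col_less_total: "a \<noteq> b \<Longrightarrow> col_less c a b \<or> col_less c b a"
  unfolding col_less_def by auto

lemma col_rank_strict_mono:
  assumes "p < r" "q < r" "col_less c q p"
  shows "col_rank r c q < col_rank r c p"
proof -
  have "{x. x < r \<and> col_less c x q} \<subset> {x. x < r \<and> col_less c x p}"
    using assms col_less_trans col_less_irrefl by blast
  then have "card {x. x < r \<and> col_less c x q} < card {x. x < r \<and> col_less c x p}"
    by (rule psubset_card_mono[rotated]) auto
  then show ?thesis using assms by (simp add: col_rank_def)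
qed

lemma col_rank_less_iff:
  assumes "p < r" "q < r"
  shows "col_rank r c q < col_rank r c p \<longleftrightarrow> col_less c q p"
proof
  assume h: "col_rank r c q < col_rank r c p"
  show "col_less c q p"
  proof (rule ccontr)
    assume "\<not> col_less c q p"
    then have "q = p \<or> col_less c p q" using col_less_total by blast
    then show False using h col_rank_strict_mono[OF assms(2,1), of c] by auto
  qed
qed (rule col_rank_strict_mono[OF assms])

lemma col_rank_less: "p < r \<Longrightarrow> col_rank r c p < r"
proof -
  assume p: "p < r"
  have "{q. q < r \<and> col_less c q p} \<subseteq> {..<r} - {p}" using col_less_irrefl by auto
  then have "card {q. q < r \<and> col_less c q p} \<le> card ({..<r} - {p})"
    by (rule card_mono[rotated]) auto
  also have "\<dots> < r" using p by simp
  finally show ?thesis using p by (simp add: col_rank_def)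
qed

lemma col_rank_permutes: "col_rank r c permutes {..<r}"
proof (rule bij_imp_permutes)
  have inj: "inj_on (col_rank r c) {..<r}"
  proof (rule inj_onI)
    fix p q assume "p \<in> {..<r}" "q \<in> {..<r}" "col_rank r c p = col_rank r c q"
    then show "p = q"
      using col_rank_strict_mono[of p r q c] col_rank_strict_mono[of q r p c] col_less_total[of p q c]
      by force
  qed
  have "col_rank r c ` {..<r} \<subseteq> {..<r}" using col_rank_less by auto
  then have "col_rank r c ` {..<r} = {..<r}"
    using endo_inj_surj[OF finite_lessThan _ inj] by blast
  then show "bij_betw (col_rank r c) {..<r} {..<r}" using inj by (simp add: bij_betw_def)
qed (simp add: col_rank_def)

lemma col_sort_permutes: "col_sort r c permutes {..<r}"
  unfolding col_sort_def by (rule permutes_inv[OF col_rank_permutes])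

lemma col_rank_col_sort [simp]: "col_rank r c (col_sort r c i) = i"
  unfolding col_sort_def by (meson permutes_inverses(1) col_rank_permutes)

lemma col_sort_col_rank [simp]: "col_sort r c (col_rank r c i) = i"
  unfolding col_sort_def by (meson permutes_inverses(2) col_rank_permutes)

lemma col_sort_less: "i < r \<Longrightarrow> col_sort r c i < r"
  by (rule permutes_less[OF col_sort_permutes])

lemma col_rank_inj: "col_rank r c p = col_rank r c q \<longleftrightarrow> p = q"
  by (metis col_sort_col_rank)

lemma sign_col_sort: "sign (col_sort r c) = (-1) ^ card (inversions r c)"
proof -
  have "sign (col_sort r c) = sign (col_rank r c)"
    unfolding col_sort_def
    by (rule sign_inverse) (rule permutes_imp_permutation[OF _ col_rank_permutes], simp)
  also have "\<dots> = (-1) ^ card (inversions r (col_rank r c))"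
    by (rule sign_eq_inversions[OF col_rank_permutes])
  also have "inversions r (col_rank r c) = inversions r c"
  proof -
    have "x < y \<Longrightarrow> y < r \<Longrightarrow> col_rank r c y < col_rank r c x \<longleftrightarrow> c y < c x" for x y
      using col_rank_less_iff[of x r y c] by (auto simp: col_less_def)
    then show ?thesis unfolding inversions_def by auto
  qed
  finally show ?thesis .
qed

lemma col_less_chain:
  assumes "\<forall>i. Suc i < r \<longrightarrow> col_less c (s i) (s (Suc i))"
  shows "i < j \<Longrightarrow> j < r \<Longrightarrow> col_less c (s i) (s j)"
proof (induction j)
  case (Suc j)
  show ?case
  proof (cases "i = j")
    case True
    then show ?thesis using assms Suc.prems by auto
  next
    case False
    then have "col_less c (s i) (s j)" using Suc by auto
    then show ?thesis using assms Suc.prems col_less_trans by blast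
  qed
qed simp

lemma col_rank_of_chain:
  assumes s: "s permutes {..<r}" and chain: "\<forall>i. Suc i < r \<longrightarrow> col_less c (s i) (s (Suc i))"
    and i: "i < r"
  shows "col_rank r c (s i) = i"
proof -
  have "{q. q < r \<and> col_less c q (s i)} = s ` {..<i}"
  proof
    show "s ` {..<i} \<subseteq> {q. q < r \<and> col_less c q (s i)}"
      using col_less_chain[OF chain] i permutes_less[OF s] by auto
    show "{q. q < r \<and> col_less c q (s i)} \<subseteq> s ` {..<i}"
    proof clarify
      fix q assume q: "q < r" "col_less c q (s i)"
      obtain j where j: "j < r" "q = s j"
        using q(1) by (metis imageE lessThan_iff permutes_image s)
      have "j < i"
      proof (rule ccontr)
        assume "\<not> j < i"
        then have "j = i \<or> i < j" by auto
        then show False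
          using q j col_less_chain[OF chain, of i j] col_less_irrefl col_less_asym by blast
      qed
      then show "q \<in> s ` {..<i}" using j by auto
    qed
  qed
  moreover have "card (s ` {..<i}) = i"
    using card_image[OF inj_on_subset[OF permutes_inj[OF s]]] by simp
  ultimately show ?thesis using permutes_less[OF s i] by (simp add: col_rank_def)
qed

lemma col_sort_eq_iff:
  assumes s: "s permutes {..<r}"
  shows "col_sort r c = s \<longleftrightarrow> (\<forall>i. Suc i < r \<longrightarrow> col_less c (s i) (s (Suc i)))"
proof
  assume h: "col_sort r c = s"
  show "\<forall>i. Suc i < r \<longrightarrow> col_less c (s i) (s (Suc i))"
  proof (intro allI impI)
    fix i assume i: "Suc i < r"
    have "col_rank r c (s i) < col_rank r c (s (Suc i))" using col_rank_col_sort[of r c] h by simp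
    moreover have "s i < r" "s (Suc i) < r" using permutes_less[OF s] i by auto
    ultimately show "col_less c (s i) (s (Suc i))" using col_rank_less_iff by blast
  qed
next
  assume chain: "\<forall>i. Suc i < r \<longrightarrow> col_less c (s i) (s (Suc i))"
  show "col_sort r c = s"
  proof
    fix i
    show "col_sort r c i = s i"
    proof (cases "i < r")
      case True
      then show ?thesis using col_rank_of_chain[OF s chain] col_sort_col_rank by metis
    next
      case False
      then show ?thesis using permutes_not_in[OF s] permutes_not_in[OF col_sort_permutes] by simp
    qed
  qed
qed

section \<open>Counting colourings with a given standardization\<close>

definition gapped :: "(nat \<Rightarrow> nat) \<Rightarrow> nat list \<Rightarrow> bool" where
  "gapped d xs \<longleftrightarrow> (\<forall>i. Suc i < length xs \<longrightarrow> xs ! i + d i \<le> xs ! Suc i)"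

definition gapped_lists :: "(nat \<Rightarrow> nat) \<Rightarrow> nat \<Rightarrow> nat \<Rightarrow> nat list set" where
  "gapped_lists d r k = {xs. length xs = r \<and> set xs \<subseteq> {..<k} \<and> gapped d xs}"

lemma finite_gapped_lists: "finite (gapped_lists d r k)"
  by (rule finite_subset[OF _ finite_lists_length_eq[of "{..<k}" r]]) (auto simp: gapped_lists_def)

lemma gapped_le_last:
  assumes "gapped d xs" "i < length xs"
  shows "xs ! i \<le> last xs"
proof -
  have "xs ! i \<le> xs ! (i + t)" if "i + t < length xs" for t
    using that
  proof (induction t)
    case (Suc t)
    then have "xs ! i \<le> xs ! (i + t)" by simp
    moreover have "xs ! (i + t) + d (i + t) \<le> xs ! Suc (i + t)"
      using assms(1) Suc.prems unfolding gapped_def by simp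
    ultimately show ?case by simp
  qed simp
  from this[of "length xs - 1 - i"] assms(2) have "xs ! i \<le> xs ! (length xs - 1)" by simp
  moreover have "xs \<noteq> []" using assms(2) by auto
  ultimately show ?thesis by (simp add: last_conv_nth)
qed

lemma gapped_snoc:
  assumes ne: "xs \<noteq> []"
  shows "gapped d (xs @ [v]) \<longleftrightarrow> gapped d xs \<and> last xs + d (length xs - 1) \<le> v"
proof
  assume h: "gapped d (xs @ [v])"
  have "gapped d xs"
    unfolding gapped_def
  proof (intro allI impI)
    fix i assume i: "Suc i < length xs"
    have "(xs @ [v]) ! i + d i \<le> (xs @ [v]) ! Suc i" using h i unfolding gapped_def by simp
    then show "xs ! i + d i \<le> xs ! Suc i" using i by (simp add: nth_append)
  qed
  moreover have "last xs + d (length xs - 1) \<le> v"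
  proof -
    have "Suc (length xs - 1) < length (xs @ [v])" using ne by simp
    then have "(xs @ [v]) ! (length xs - 1) + d (length xs - 1) \<le> (xs @ [v]) ! Suc (length xs - 1)"
      using h unfolding gapped_def by blast
    then show ?thesis using ne by (simp add: nth_append last_conv_nth)
  qed
  ultimately show "gapped d xs \<and> last xs + d (length xs - 1) \<le> v" by simp
next
  assume h: "gapped d xs \<and> last xs + d (length xs - 1) \<le> v"
  show "gapped d (xs @ [v])"
    unfolding gapped_def
  proof (intro allI impI)
    fix i assume i: "Suc i < length (xs @ [v])"
    show "(xs @ [v]) ! i + d i \<le> (xs @ [v]) ! Suc i"
    proof (cases "Suc i < length xs")
      case True
      then show ?thesis using h unfolding gapped_def by (simp add: nth_append)
    next
      case False
      then have "i = length xs - 1" "Suc i = length xs" using i by auto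
      then show ?thesis using h ne by (simp add: nth_append last_conv_nth)
    qed
  qed
qed

lemma sum_shifted_choose:
  "(\<Sum>v<k. if e \<le> v then (r + v - e) choose r else 0) =
     (if e < k then (r + k - e) choose Suc r else (0::nat))"
proof (induction k)
  case (Suc k)
  show ?case
  proof (cases "e \<le> k")
    case True
    show ?thesis
    proof (cases "e = k")
      case True
      then show ?thesis using Suc by simp
    next
      case False
      then have "e < k" using \<open>e \<le> k\<close> by simp
      then have "r + Suc k - e = Suc (r + k - e)" by simp
      then show ?thesis using Suc \<open>e < k\<close> by simp
    qed
  next
    case False
    then show ?thesis using Suc by simp
  qed
qed simp

lemma gapped_lists_Suc:
  assumes r: "r \<ge> 1"
  shows "gapped_lists d (Suc r) k =
    (\<Union>v<k. (\<lambda>xs. xs @ [v]) ` gapped_lists d r (Suc v - d (r - 1)))"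
proof
  show "gapped_lists d (Suc r) k \<subseteq> (\<Union>v<k. (\<lambda>xs. xs @ [v]) ` gapped_lists d r (Suc v - d (r - 1)))"
  proof
    fix ys assume ys: "ys \<in> gapped_lists d (Suc r) k"
    then obtain xs v where yv: "ys = xs @ [v]" "length xs = r"
      by (auto simp: gapped_lists_def length_Suc_conv_rev)
    have ne: "xs \<noteq> []" using yv r by auto
    have v: "v < k" using ys yv by (auto simp: gapped_lists_def)
    have ok: "gapped d xs" "last xs + d (r - 1) \<le> v"
      using ys yv gapped_snoc[OF ne] by (auto simp: gapped_lists_def)
    have "set xs \<subseteq> {..<Suc v - d (r - 1)}"
    proof
      fix x assume "x \<in> set xs"
      then obtain i where "i < length xs" "x = xs ! i" by (auto simp: in_set_conv_nth)
      then have "x \<le> last xs" using gapped_le_last ok by simp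
      then show "x \<in> {..<Suc v - d (r - 1)}" using ok by auto
    qed
    then show "ys \<in> (\<Union>v<k. (\<lambda>xs. xs @ [v]) ` gapped_lists d r (Suc v - d (r - 1)))"
      using yv v ok by (auto simp: gapped_lists_def)
  qed
  show "(\<Union>v<k. (\<lambda>xs. xs @ [v]) ` gapped_lists d r (Suc v - d (r - 1))) \<subseteq> gapped_lists d (Suc r) k"
  proof clarify
    fix v xs assume v: "v < k" and xs: "xs \<in> gapped_lists d r (Suc v - d (r - 1))"
    have ne: "xs \<noteq> []" using xs r by (auto simp: gapped_lists_def)
    have "last xs \<in> set xs" using ne by simp
    then have "last xs + d (r - 1) \<le> v" using xs by (auto simp: gapped_lists_def)
    then have "gapped d (xs @ [v])" using gapped_snoc[OF ne] xs by (auto simp: gapped_lists_def)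
    moreover have "set xs \<subseteq> {..<k}" using xs v by (auto simp: gapped_lists_def)
    ultimately show "xs @ [v] \<in> gapped_lists d (Suc r) k" using xs v by (auto simp: gapped_lists_def)
  qed
qed

lemma card_gapped_lists:
  assumes "r \<ge> 1"
  shows "card (gapped_lists d r k) =
    (if (\<Sum>i<r - 1. d i) < k then (r + k - 1 - (\<Sum>i<r - 1. d i)) choose r else 0)"
  using assms
proof (induction r arbitrary: k rule: nat_induct_at_least)
  case base
  have "gapped_lists d 1 k = (\<lambda>v. [v]) ` {..<k}"
    by (auto simp: gapped_lists_def gapped_def length_Suc_conv)
  then show ?case by (simp add: card_image inj_on_def)
next
  case (Suc r)
  let ?e = "d (r - 1)"
  let ?D = "\<Sum>i<r - 1. d i"
  have "card (gapped_lists d (Suc r) k) = (\<Sum>v<k. card ((\<lambda>xs. xs @ [v]) ` gapped_lists d r (Suc v - ?e)))"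
    unfolding gapped_lists_Suc[OF Suc.hyps]
    by (rule card_UN_disjoint) (auto simp: finite_gapped_lists)
  also have "\<dots> = (\<Sum>v<k. card (gapped_lists d r (Suc v - ?e)))"
    by (rule sum.cong) (auto simp: card_image inj_on_def)
  also have "\<dots> = (\<Sum>v<k. if ?D + ?e \<le> v then (r + v - (?D + ?e)) choose r else 0)"
  proof (rule sum.cong[OF refl])
    fix v
    have "(?D < Suc v - ?e) = (?D + ?e \<le> v)" by auto
    moreover have "?D + ?e \<le> v \<Longrightarrow> r + (Suc v - ?e) - 1 - ?D = r + v - (?D + ?e)" by auto
    ultimately show "card (gapped_lists d r (Suc v - ?e)) =
        (if ?D + ?e \<le> v then (r + v - (?D + ?e)) choose r else 0)"
      unfolding Suc.IH by simp
  qed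
  also have "\<dots> = (if ?D + ?e < k then (r + k - (?D + ?e)) choose Suc r else 0)"
    by (rule sum_shifted_choose)
  also have "?D + ?e = (\<Sum>i<Suc r - 1. d i)"
  proof -
    have "{..<r} = insert (r - 1) {..<r - 1}" using Suc.hyps by auto
    then show ?thesis by (simp add: add.commute)
  qed
  finally show ?case by simp
qed

definition descent_at :: "(nat \<Rightarrow> nat) \<Rightarrow> nat \<Rightarrow> nat" where
  "descent_at s i = (if s (Suc i) < s i then 1 else 0)"

lemma sum_descent_at: "(\<Sum>i<r - 1. descent_at s i) = descents r s"
proof -
  have "(\<Sum>i<r - 1. descent_at s i) = card ({..<r - 1} \<inter> {i. s (Suc i) < s i})"
    unfolding descent_at_def by (simp add: sum.If_cases)
  also have "{..<r - 1} \<inter> {i. s (Suc i) < s i} = {i. Suc i < r \<and> s (Suc i) < s i}" by auto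
  finally show ?thesis by (simp add: descents_def)
qed

lemma col_less_iff_descent_at:
  assumes s: "s permutes {..<r}"
  shows "col_less c (s i) (s (Suc i)) \<longleftrightarrow> c (s i) + descent_at s i \<le> c (s (Suc i))"
proof -
  have "s i \<noteq> s (Suc i)" using permutes_inj[OF s] by (metis inj_eq n_not_Suc_n)
  then show ?thesis unfolding col_less_def descent_at_def by auto
qed

text \<open>Reading a colouring along \<open>s\<close> identifies the colourings standardized by \<open>s\<close> with the
  colour sequences that increase weakly, and strictly at the descents of \<open>s\<close>.\<close>
lemma bij_betw_col_sort_fibre:
  assumes s: "s permutes {..<r}"
  shows "bij_betw (\<lambda>c. map (\<lambda>i. c (s i)) [0..<r])
           {c \<in> colourings r k. col_sort r c = s} (gapped_lists (descent_at s) r k)"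
    (is "bij_betw ?f ?F ?L")
proof -
  let ?g = "\<lambda>xs p. if p < r then xs ! inv s p else undefined"
  have sl: "s i < r" if "i < r" for i using permutes_less[OF s that] .
  have il: "inv s p < r" if "p < r" for p using permutes_less[OF permutes_inv[OF s] that] .
  note inv = permutes_inverses[OF s]
  show ?thesis
  proof (rule bij_betw_byWitness[where f' = ?g])
    show "\<forall>c\<in>?F. ?g (?f c) = c"
      using il inv by (auto simp: colourings_def PiE_def extensional_def)
    show "\<forall>xs\<in>?L. ?f (?g xs) = xs"
      using sl inv by (auto simp: gapped_lists_def intro: nth_equalityI)
    show "?f ` ?F \<subseteq> ?L"
    proof (rule image_subsetI)
      fix c assume "c \<in> ?F"
      then have c: "c \<in> colourings r k" and cs: "col_sort r c = s" by auto
      have "set (?f c) \<subseteq> {..<k}"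
        using sl colouringsD(1)[OF c] by auto
      moreover have "gapped (descent_at s) (?f c)"
        using cs col_sort_eq_iff[OF s] col_less_iff_descent_at[OF s] by (auto simp: gapped_def)
      ultimately show "?f c \<in> ?L" by (simp add: gapped_lists_def)
    qed
    show "?g ` ?L \<subseteq> ?F"
    proof (rule image_subsetI)
      fix xs assume xs: "xs \<in> ?L"
      have "xs ! inv s p < k" if "p < r" for p
      proof -
        have "xs ! inv s p \<in> set xs" using xs il[OF that] by (simp add: gapped_lists_def)
        then show ?thesis using xs by (auto simp: gapped_lists_def)
      qed
      then have "?g xs \<in> colourings r k" by (intro colouringsI) auto
      moreover have "col_less (?g xs) (s i) (s (Suc i))" if "Suc i < r" for i
        using xs that sl inv col_less_iff_descent_at[OF s]
        by (auto simp: gapped_lists_def gapped_def)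
      ultimately show "?g xs \<in> ?F"
        using col_sort_eq_iff[OF s] by blast
    qed
  qed
qed

lemma card_col_sort_fibre:
  assumes s: "s permutes {..<r}" and r: "r \<ge> 1"
  shows "card {c \<in> colourings r k. col_sort r c = s} =
           (if descents r s < k then (r + k - 1 - descents r s) choose r else 0)"
proof -
  have "card {c \<in> colourings r k. col_sort r c = s} = card (gapped_lists (descent_at s) r k)"
    by (rule bij_betw_same_card[OF bij_betw_col_sort_fibre[OF s]])
  then show ?thesis unfolding card_gapped_lists[OF r] sum_descent_at .
qed

lemma eul_lambda_summand:
  assumes t: "t \<le> k - 1" and k: "k \<ge> 1"
  shows "(-1) ^ t * of_nat ((r + t) choose t) * eul_l r (k - t) s =
    (if t = k - 1 - descents r s
     then (if s permutes {..<r} \<and> descents r s < k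
           then (-1) ^ (k - 1) * of_nat ((r + k - 1 - descents r s) choose r) * of_int (sign s) else 0)
     else 0)"
proof (cases "t = k - 1 - descents r s \<and> s permutes {..<r} \<and> descents r s < k")
  case True
  then have e1: "k - t - 1 = descents r s" using t by auto
  have e2: "(r + t) choose t = (r + k - 1 - descents r s) choose r"
    using binomial_symmetric[of t "r + t"] True by (simp add: add.commute)
  have e3: "(-1) ^ t * (-1) ^ (k - t - 1) = ((-1) ^ (k - 1) :: complex)"
  proof -
    have "t + (k - t - 1) = k - 1" using t by simp
    then show ?thesis by (simp add: power_add[symmetric])
  qed
  have "(-1) ^ t * of_nat ((r + t) choose t) * eul_l r (k - t) s
      = ((-1) ^ t * (-1) ^ (k - t - 1)) * of_nat ((r + k - 1 - descents r s) choose r) * of_int (sign s)"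
    unfolding eul_l_def using True e1 e2 by simp
  also have "\<dots> = (-1) ^ (k - 1) * of_nat ((r + k - 1 - descents r s) choose r) * of_int (sign s)"
    by (simp only: e3)
  finally have eq: "(-1) ^ t * of_nat ((r + t) choose t) * eul_l r (k - t) s =
      (-1) ^ (k - 1) * of_nat ((r + k - 1 - descents r s) choose r) * of_int (sign s)" .
  have c1: "t = k - 1 - descents r s" and c2: "s permutes {..<r} \<and> descents r s < k" using True by auto
  show ?thesis unfolding if_P[OF c1] if_P[OF c2] by (rule eq)
next
  case False
  have "\<not> (s permutes {..<r} \<and> descents r s = k - t - 1)" using False t k by auto
  then have "eul_l r (k - t) s = 0" unfolding eul_l_def by auto
  then show ?thesis using False by auto
qed

lemma signed_eul_lambda_eq:
  assumes k: "k \<ge> 1"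
  shows "(-1) ^ (k - 1) * eul_lambda r k s =
    (if s permutes {..<r} \<and> descents r s < k
     then of_int (sign s) * of_nat ((r + k - 1 - descents r s) choose r) else 0)"
proof -
  let ?d = "descents r s"
  let ?P = "s permutes {..<r} \<and> ?d < k"
  let ?X = "(if ?P then (-1) ^ (k - 1) * of_nat ((r + k - 1 - ?d) choose r) * of_int (sign s) else 0 :: complex)"
  have "eul_lambda r k s = (\<Sum>t\<in>{0..k-1}. if t = k - 1 - ?d then ?X else 0)"
    unfolding eul_lambda_def using eul_lambda_summand[OF _ k] by (intro sum.cong) auto
  also have "\<dots> = ?X"
  proof -
    have "k - 1 - ?d \<in> {0..k-1}" by simp
    then show ?thesis by (subst sum.delta) auto
  qed
  finally have "(-1) ^ (k - 1) * eul_lambda r k s = (-1) ^ (k - 1) * ?X" by simp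
  also have "\<dots> = (if ?P then of_int (sign s) * of_nat ((r + k - 1 - ?d) choose r) else 0)"
    by (simp add: power_add[symmetric] mult_ac)
  finally show ?thesis .
qed

section \<open>Operators on words given by kernels\<close>

lemma finite_inj_words: "finite (inj_words n r)"
  by (rule finite_subset[OF _ finite_lists_length_eq[of "{1..n}" r]]) (auto simp: inj_words_def)

lemma length_perm_word [simp]: "length (perm_word s w) = length w"
  by (simp add: perm_word_def)

lemma nth_perm_word: "i < length w \<Longrightarrow> perm_word s w ! i = w ! s i"
  by (simp add: perm_word_def)

lemma perm_word_in_inj_words:
  assumes w: "w \<in> inj_words n r" and s: "s permutes {..<r}"
  shows "perm_word s w \<in> inj_words n r"
proof -
  have lw: "length w = r" using w by (simp add: inj_words_def)
  have "distinct (perm_word s w)"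
    unfolding distinct_conv_nth
  proof (intro allI impI)
    fix i j assume "i < length (perm_word s w)" "j < length (perm_word s w)" "i \<noteq> j"
    then have ij: "i < r" "j < r" "i \<noteq> j" using lw by auto
    then have "s i \<noteq> s j" using permutes_inj[OF s] by (meson inj_eq)
    moreover have "s i < r" "s j < r" using ij permutes_less[OF s] by auto
    ultimately show "perm_word s w ! i \<noteq> perm_word s w ! j"
      using w ij lw by (simp add: nth_perm_word inj_words_def nth_eq_iff_index_eq)
  qed
  moreover have "set (perm_word s w) \<subseteq> set w"
    using permutes_less[OF s] lw by (auto simp: perm_word_def)
  ultimately show ?thesis using w lw by (auto simp: inj_words_def)
qed

lemma perm_word_comp:
  assumes "length w = r" "t permutes {..<r}"
  shows "perm_word t (perm_word s w) = perm_word (s \<circ> t) w"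
  using assms permutes_less[OF assms(2)] by (auto simp: perm_word_def intro!: nth_equalityI)

definition kernel_map ::
    "nat list set \<Rightarrow> (nat list \<Rightarrow> nat list \<Rightarrow> complex) \<Rightarrow> (nat list \<Rightarrow> complex) \<Rightarrow> nat list \<Rightarrow> complex"
  where "kernel_map W K f = (\<lambda>v. \<Sum>w\<in>W. f w * K w v)"

lemma kernel_map_cong:
  "(\<And>w v. w \<in> W \<Longrightarrow> K w v = K' w v) \<Longrightarrow> kernel_map W K f = kernel_map W K' f"
  unfolding kernel_map_def by (intro ext sum.cong) auto

lemma kernel_map_comp:
  assumes "finite W1" "finite W2"
  shows "kernel_map W2 K2 (kernel_map W1 K1 f) = kernel_map W1 (\<lambda>w v. \<Sum>u\<in>W2. K1 w u * K2 u v) f"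
proof
  fix v
  have "kernel_map W2 K2 (kernel_map W1 K1 f) v = (\<Sum>u\<in>W2. \<Sum>w\<in>W1. f w * K1 w u * K2 u v)"
    unfolding kernel_map_def by (simp add: sum_distrib_right)
  also have "\<dots> = (\<Sum>w\<in>W1. \<Sum>u\<in>W2. f w * K1 w u * K2 u v)" by (rule sum.swap)
  finally show "kernel_map W2 K2 (kernel_map W1 K1 f) v = kernel_map W1 (\<lambda>w v. \<Sum>u\<in>W2. K1 w u * K2 u v) f v"
    unfolding kernel_map_def by (simp add: sum_distrib_left mult.assoc)
qed

lemma kernel_map_lincomb:
  assumes "finite J"
  shows "kernel_map W K (\<lambda>v. \<Sum>j\<in>J. a j * g j v) = (\<lambda>v. \<Sum>j\<in>J. a j * kernel_map W K (g j) v)"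
proof
  fix v
  have "kernel_map W K (\<lambda>v. \<Sum>j\<in>J. a j * g j v) v = (\<Sum>w\<in>W. \<Sum>j\<in>J. a j * g j w * K w v)"
    unfolding kernel_map_def by (simp add: sum_distrib_right)
  also have "\<dots> = (\<Sum>j\<in>J. \<Sum>w\<in>W. a j * g j w * K w v)" by (rule sum.swap)
  finally show "kernel_map W K (\<lambda>v. \<Sum>j\<in>J. a j * g j v) v = (\<Sum>j\<in>J. a j * kernel_map W K (g j) v)"
    unfolding kernel_map_def by (simp add: sum_distrib_left mult.assoc)
qed

lemma sum_indicator_mult:
  assumes "finite W" "x \<in> W"
  shows "(\<Sum>u\<in>W. (if x = u then 1 else 0) * g u) = (g x :: complex)"
proof -
  have "(\<Sum>u\<in>W. (if x = u then 1 else 0) * g u) = (\<Sum>u\<in>W. if x = u then g u else 0)"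
    by (rule sum.cong) auto
  also have "\<dots> = g x" using assms by simp
  finally show ?thesis .
qed

definition act_kernel :: "nat \<Rightarrow> ((nat \<Rightarrow> nat) \<Rightarrow> complex) \<Rightarrow> nat list \<Rightarrow> nat list \<Rightarrow> complex" where
  "act_kernel r e w v = (\<Sum>s | s permutes {..<r}. e s * (if perm_word s w = v then 1 else 0))"

definition bd_kernel :: "nat \<Rightarrow> nat list \<Rightarrow> nat list \<Rightarrow> complex" where
  "bd_kernel r u v = (\<Sum>j<r. if del_at j u = v then (-1) ^ j else 0)"

lemma act_eq_kernel_map: "act n r e f = kernel_map (inj_words n r) (act_kernel r e) f"
proof
  fix v
  have "act n r e f v =
      (\<Sum>s | s permutes {..<r}. \<Sum>w\<in>inj_words n r. e s * (if perm_word s w = v then f w else 0))"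
    unfolding act_def by (simp add: sum_distrib_left)
  also have "\<dots> = (\<Sum>w\<in>inj_words n r. \<Sum>s | s permutes {..<r}. e s * (if perm_word s w = v then f w else 0))"
    by (rule sum.swap)
  finally show "act n r e f v = kernel_map (inj_words n r) (act_kernel r e) f v"
    unfolding kernel_map_def act_kernel_def by (simp add: sum_distrib_left mult_ac if_distrib cong: if_cong)
qed

lemma bd_eq_kernel_map: "bd n r f = kernel_map (inj_words n r) (bd_kernel r) f"
  unfolding bd_def kernel_map_def bd_kernel_def by simp

lemma act_cong:
  "(\<And>w. w \<in> inj_words n r \<Longrightarrow> h w = h' w) \<Longrightarrow> act n r e h = act n r e h'"
  unfolding act_eq_kernel_map kernel_map_def by (intro ext sum.cong) auto

lemma act_lincomb:
  "finite J \<Longrightarrow> act n r e (\<lambda>v. \<Sum>j\<in>J. a j * g j v) = (\<lambda>v. \<Sum>j\<in>J. a j * act n r e (g j) v)"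
  unfolding act_eq_kernel_map by (rule kernel_map_lincomb)

lemma act_sum:
  "finite J \<Longrightarrow> act n r e (\<lambda>v. \<Sum>j\<in>J. g j v) = (\<lambda>v. \<Sum>j\<in>J. act n r e (g j) v)"
  using act_lincomb[of J n r e "\<lambda>_. 1" g] by simp

lemma bd_lincomb:
  "finite J \<Longrightarrow> bd n r (\<lambda>v. \<Sum>j\<in>J. a j * g j v) = (\<lambda>v. \<Sum>j\<in>J. a j * bd n r (g j) v)"
  unfolding bd_eq_kernel_map by (rule kernel_map_lincomb)

lemma act_lincomb_left:
  assumes "finite J"
  shows "act n r (\<lambda>s. \<Sum>j\<in>J. a j * e j s) f = (\<lambda>v. \<Sum>j\<in>J. a j * act n r (e j) f v)"
proof
  fix v
  have "act n r (\<lambda>s. \<Sum>j\<in>J. a j * e j s) f v =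
      (\<Sum>s | s permutes {..<r}. \<Sum>j\<in>J. a j * (e j s * (\<Sum>w\<in>inj_words n r. if perm_word s w = v then f w else 0)))"
    unfolding act_def by (simp add: sum_distrib_right mult.assoc)
  also have "\<dots> = (\<Sum>j\<in>J. \<Sum>s | s permutes {..<r}. a j * (e j s * (\<Sum>w\<in>inj_words n r. if perm_word s w = v then f w else 0)))"
    by (rule sum.swap)
  finally show "act n r (\<lambda>s. \<Sum>j\<in>J. a j * e j s) f v = (\<Sum>j\<in>J. a j * act n r (e j) f v)"
    unfolding act_def by (simp add: sum_distrib_left)
qed

lemma act_in_M: "act n r e h \<in> M n r"
proof -
  have "act n r e h v = 0" if v: "v \<notin> inj_words n r" for v
  proof -
    have "(\<Sum>w\<in>inj_words n r. if perm_word s w = v then h w else 0) = 0" if "s permutes {..<r}" for s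
      using perm_word_in_inj_words[OF _ that] v by (intro sum.neutral) auto
    then show ?thesis unfolding act_def by simp
  qed
  then show ?thesis unfolding M_def by auto
qed

section \<open>The Adams elements as signed shuffles\<close>

text \<open>The element \<open>\<psi>_k\<close>; \<open>adams r k = \<Sum>_j k^j e_r^(j)\<close> by the definition of \<^const>\<open>euler_e\<close>.\<close>
abbreviation adams :: "nat \<Rightarrow> nat \<Rightarrow> (nat \<Rightarrow> nat) \<Rightarrow> complex" where
  "adams r k \<equiv> \<lambda>s. (-1) ^ (k - 1) * eul_lambda r k s"

definition shuffle_kernel :: "nat \<Rightarrow> nat \<Rightarrow> nat list \<Rightarrow> nat list \<Rightarrow> complex" where
  "shuffle_kernel r k w v = (\<Sum>c\<in>colourings r k.
      of_int (sign (col_sort r c)) * (if perm_word (col_sort r c) w = v then 1 else 0))"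

lemma act_kernel_adams:
  assumes k: "k \<ge> 1" and r: "r \<ge> 1"
  shows "act_kernel r (adams r k) w v = shuffle_kernel r k w v"
proof -
  let ?P = "{s. s permutes {..<r}}"
  let ?I = "\<lambda>s. (if perm_word s w = v then 1 else 0 :: complex)"
  have "act_kernel r (adams r k) w v
      = (\<Sum>s\<in>?P. of_nat (card {c \<in> colourings r k. col_sort r c = s}) * (of_int (sign s) * ?I s))"
    unfolding act_kernel_def
  proof (rule sum.cong[OF refl])
    fix s assume s: "s \<in> ?P"
    show "adams r k s * ?I s =
          of_nat (card {c \<in> colourings r k. col_sort r c = s}) * (of_int (sign s) * ?I s)"
      unfolding signed_eul_lambda_eq[OF k] card_col_sort_fibre[OF s[simplified] r] using s by auto
  qed
  also have "\<dots> = (\<Sum>s\<in>?P. \<Sum>c\<in>{c \<in> colourings r k. col_sort r c = s}. of_int (sign (col_sort r c)) * ?I (col_sort r c))"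
    by (intro sum.cong) simp_all
  also have "\<dots> = (\<Sum>c\<in>colourings r k. of_int (sign (col_sort r c)) * ?I (col_sort r c))"
    by (rule sum.group) (auto simp: finite_colourings finite_permutations col_sort_permutes)
  finally show ?thesis unfolding shuffle_kernel_def .
qed

lemma act_adams:
  assumes "k \<ge> 1" "r \<ge> 1"
  shows "act n r (adams r k) f = kernel_map (inj_words n r) (shuffle_kernel r k) f"
  unfolding act_eq_kernel_map using act_kernel_adams[OF assms] by (intro kernel_map_cong) simp

section \<open>Products of Adams elements\<close>

lemma mult_add_less_mult_add_iff:
  fixes a b x y m :: nat
  assumes "x < m" "y < m"
  shows "a * m + x < b * m + y \<longleftrightarrow> a < b \<or> (a = b \<and> x < y)"
proof (cases a b rule: linorder_cases)
  case less
  then have "a * m + x < (a + 1) * m" using assms by simp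
  also have "\<dots> \<le> b * m" using less by (intro mult_le_mono1) simp
  finally show ?thesis using less by simp
next
  case greater
  then have "b * m + y < (b + 1) * m" using assms by simp
  also have "\<dots> \<le> a * m" using greater by (intro mult_le_mono1) simp
  finally show ?thesis using greater by simp
qed simp

lemma mult_add_eq_mult_add_iff:
  fixes a b x y m :: nat
  assumes "x < m" "y < m"
  shows "a * m + x = b * m + y \<longleftrightarrow> a = b \<and> x = y"
  using mult_add_less_mult_add_iff[OF assms, of a b] mult_add_less_mult_add_iff[OF assms(2,1), of b a]
  by auto

text \<open>Refining a colouring \<open>c\<close> by a colouring \<open>c'\<close> of its ranks: the colour \<open>c p < m\<close> becomes
  the last digit of a base-\<open>m\<close> colour whose leading digit is \<open>c'\<close> at the \<open>c\<close>-rank of \<open>p\<close>.\<close>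
definition col_refine :: "nat \<Rightarrow> nat \<Rightarrow> (nat \<Rightarrow> nat) \<Rightarrow> (nat \<Rightarrow> nat) \<Rightarrow> nat \<Rightarrow> nat" where
  "col_refine r m c c' = (\<lambda>p. if p < r then c' (col_rank r c p) * m + c p else undefined)"

lemma col_less_col_refine:
  assumes c: "c \<in> colourings r m" and p: "p < r" and q: "q < r"
  shows "col_less (col_refine r m c c') q p \<longleftrightarrow> col_less c' (col_rank r c q) (col_rank r c p)"
proof -
  have cm: "c p < m" "c q < m" using colouringsD(1)[OF c] p q by auto
  have "col_less (col_refine r m c c') q p \<longleftrightarrow>
        c' (col_rank r c q) < c' (col_rank r c p) \<or> (c' (col_rank r c q) = c' (col_rank r c p) \<and> col_less c q p)"
    unfolding col_less_def col_refine_def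
    using p q mult_add_less_mult_add_iff[OF cm(2,1)] mult_add_eq_mult_add_iff[OF cm(2,1)] by auto
  also have "\<dots> \<longleftrightarrow> col_less c' (col_rank r c q) (col_rank r c p)"
    unfolding col_less_def[of c'] using col_rank_less_iff[OF p q, of c] col_rank_inj[of r c q p] by auto
  finally show ?thesis .
qed

lemma col_rank_col_refine:
  assumes c: "c \<in> colourings r m"
  shows "col_rank r (col_refine r m c c') = col_rank r c' \<circ> col_rank r c"
proof
  fix p
  show "col_rank r (col_refine r m c c') p = (col_rank r c' \<circ> col_rank r c) p"
  proof (cases "p < r")
    case True
    let ?A = "{q. q < r \<and> col_less c' (col_rank r c q) (col_rank r c p)}"
    have "{q. q < r \<and> col_less (col_refine r m c c') q p} = ?A"
      using col_less_col_refine[OF c True] by auto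
    moreover have "col_rank r c ` ?A = {q'. q' < r \<and> col_less c' q' (col_rank r c p)}"
    proof
      show "col_rank r c ` ?A \<subseteq> {q'. q' < r \<and> col_less c' q' (col_rank r c p)}"
        using col_rank_less by auto
      show "{q'. q' < r \<and> col_less c' q' (col_rank r c p)} \<subseteq> col_rank r c ` ?A"
      proof clarify
        fix q' assume q': "q' < r" "col_less c' q' (col_rank r c p)"
        then show "q' \<in> col_rank r c ` ?A"
          using col_sort_less[OF q'(1)] col_rank_col_sort[of r c q'] by (metis (mono_tags, lifting) image_eqI mem_Collect_eq)
      qed
    qed
    moreover have "inj_on (col_rank r c) ?A"
      using col_rank_inj by (auto intro: inj_onI)
    ultimately have "card {q. q < r \<and> col_less (col_refine r m c c') q p} =
        card {q'. q' < r \<and> col_less c' q' (col_rank r c p)}"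
      by (metis card_image)
    then show ?thesis using True col_rank_less[OF True] by (simp add: col_rank_def)
  qed (simp add: col_rank_def)
qed

lemma col_sort_col_refine:
  assumes "c \<in> colourings r m"
  shows "col_sort r (col_refine r m c c') = col_sort r c \<circ> col_sort r c'"
  unfolding col_sort_def col_rank_col_refine[OF assms]
  by (rule o_inv_distrib) (auto intro: permutes_bij col_rank_permutes)

lemma col_refine_in_colourings:
  assumes c: "c \<in> colourings r m" and c': "c' \<in> colourings r k"
  shows "col_refine r m c c' \<in> colourings r (k * m)"
proof (rule colouringsI)
  fix p assume p: "p < r"
  have "c' (col_rank r c p) < k" using colouringsD(1)[OF c' col_rank_less[OF p]] .
  moreover have "c p < m" using colouringsD(1)[OF c p] .
  ultimately have "c' (col_rank r c p) * m + c p < (c' (col_rank r c p) + 1) * m" by simp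
  also have "\<dots> \<le> k * m" using \<open>c' (col_rank r c p) < k\<close> by (intro mult_le_mono1) simp
  finally show "col_refine r m c c' p < k * m" using p by (simp add: col_refine_def)
qed (simp add: col_refine_def)

lemma col_refine_inj:
  assumes c1: "c1 \<in> colourings r m" and c2: "c2 \<in> colourings r m"
    and c1': "c1' \<in> colourings r k" and c2': "c2' \<in> colourings r k"
    and eq: "col_refine r m c1 c1' = col_refine r m c2 c2'"
  shows "c1 = c2 \<and> c1' = c2'"
proof -
  have digits: "c1' (col_rank r c1 p) = c2' (col_rank r c2 p) \<and> c1 p = c2 p" if p: "p < r" for p
  proof -
    have "c1' (col_rank r c1 p) * m + c1 p = c2' (col_rank r c2 p) * m + c2 p"
      using fun_cong[OF eq, of p] p by (simp add: col_refine_def)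
    then show ?thesis
      using mult_add_eq_mult_add_iff[OF colouringsD(1)[OF c1 p] colouringsD(1)[OF c2 p]] by simp
  qed
  have "c1 = c2"
    using digits colouringsD(2)[OF c1] colouringsD(2)[OF c2] by (metis ext)
  moreover have "c1' q = c2' q" for q
  proof (cases "q < r")
    case True
    then show ?thesis
      using digits[OF col_sort_less[OF True, where c = c1]] \<open>c1 = c2\<close> by simp
  qed (simp add: colouringsD(2)[OF c1'] colouringsD(2)[OF c2'])
  ultimately show ?thesis by auto
qed

lemma col_refine_surj:
  assumes m: "m \<ge> 1" and c'': "c'' \<in> colourings r (k * m)"
  obtains c c' where "c \<in> colourings r m" "c' \<in> colourings r k" "c'' = col_refine r m c c'"
proof
  define c where "c = (\<lambda>p. if p < r then c'' p mod m else undefined)"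
  define c' where "c' = (\<lambda>q. if q < r then c'' (col_sort r c q) div m else undefined)"
  show "c \<in> colourings r m" using m by (intro colouringsI) (auto simp: c_def)
  show "c' \<in> colourings r k"
  proof (rule colouringsI)
    fix q assume "q < r"
    then have "c'' (col_sort r c q) < k * m" using colouringsD(1)[OF c'' col_sort_less] by blast
    then show "c' q < k" using \<open>q < r\<close> by (simp add: c'_def less_mult_imp_div_less)
  qed (simp add: c'_def)
  show "c'' = col_refine r m c c'"
  proof
    fix p
    show "c'' p = col_refine r m c c' p"
      using col_rank_less[of p r c] colouringsD(2)[OF c'']
      by (cases "p < r") (simp_all add: col_refine_def c'_def c_def)
  qed
qed

lemma bij_betw_col_refine:
  assumes "m \<ge> 1"
  shows "bij_betw (\<lambda>(c, c'). col_refine r m c c') (colourings r m \<times> colourings r k) (colourings r (k * m))"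
  unfolding bij_betw_def
proof
  show "inj_on (\<lambda>(c, c'). col_refine r m c c') (colourings r m \<times> colourings r k)"
    using col_refine_inj by (auto intro!: inj_onI)
  show "(\<lambda>(c, c'). col_refine r m c c') ` (colourings r m \<times> colourings r k) = colourings r (k * m)"
    using col_refine_in_colourings col_refine_surj[OF assms] by (auto simp: image_iff) blast
qed

lemma shuffle_kernel_mult:
  assumes m: "m \<ge> 1" and w: "w \<in> inj_words n r"
  shows "(\<Sum>u\<in>inj_words n r. shuffle_kernel r m w u * shuffle_kernel r k u v) = shuffle_kernel r (k * m) w v"
proof -
  have lw: "length w = r" using w by (simp add: inj_words_def)
  let ?s = "\<lambda>c. of_int (sign (col_sort r c)) :: complex"
  let ?I = "\<lambda>\<sigma>. if perm_word \<sigma> w = v then 1 else 0 :: complex"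
  have "(\<Sum>u\<in>inj_words n r. shuffle_kernel r m w u * shuffle_kernel r k u v)
      = (\<Sum>c\<in>colourings r m. ?s c * (\<Sum>u\<in>inj_words n r. (if perm_word (col_sort r c) w = u then 1 else 0) * shuffle_kernel r k u v))"
    unfolding shuffle_kernel_def[of r m]
    by (simp add: sum_distrib_right sum_distrib_left mult.assoc sum.swap[of _ "inj_words n r"])
  also have "\<dots> = (\<Sum>c\<in>colourings r m. ?s c * shuffle_kernel r k (perm_word (col_sort r c) w) v)"
    by (intro sum.cong refl arg_cong2[where f = "(*)"] sum_indicator_mult finite_inj_words
        perm_word_in_inj_words[OF w col_sort_permutes])
  also have "\<dots> = (\<Sum>c\<in>colourings r m. \<Sum>c'\<in>colourings r k.
      of_int (sign (col_sort r c \<circ> col_sort r c')) * ?I (col_sort r c \<circ> col_sort r c'))"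
  proof (rule sum.cong[OF refl])
    fix c
    show "?s c * shuffle_kernel r k (perm_word (col_sort r c) w) v = (\<Sum>c'\<in>colourings r k.
      of_int (sign (col_sort r c \<circ> col_sort r c')) * ?I (col_sort r c \<circ> col_sort r c'))"
      unfolding shuffle_kernel_def sum_distrib_left
    proof (rule sum.cong[OF refl])
      fix c'
      have "sign (col_sort r c \<circ> col_sort r c') = sign (col_sort r c) * sign (col_sort r c')"
        by (rule sign_compose) (auto intro: permutes_imp_permutation col_sort_permutes)
      then show "?s c * (of_int (sign (col_sort r c')) *
          (if perm_word (col_sort r c') (perm_word (col_sort r c) w) = v then 1 else 0)) =
        of_int (sign (col_sort r c \<circ> col_sort r c')) * ?I (col_sort r c \<circ> col_sort r c')"
        using perm_word_comp[OF lw col_sort_permutes, of c' "col_sort r c"] by simp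
    qed
  qed
  also have "\<dots> = (\<Sum>(c, c')\<in>colourings r m \<times> colourings r k.
      of_int (sign (col_sort r (col_refine r m c c'))) * ?I (col_sort r (col_refine r m c c')))"
    by (subst sum.cartesian_product) (auto intro!: sum.cong simp: col_sort_col_refine)
  also have "\<dots> = (\<Sum>c''\<in>colourings r (k * m). ?s c'' * ?I (col_sort r c''))"
    using sum.reindex_bij_betw[OF bij_betw_col_refine[OF m], of "\<lambda>c''. ?s c'' * ?I (col_sort r c'')"]
    by (simp add: case_prod_unfold)
  finally show ?thesis unfolding shuffle_kernel_def .
qed

lemma act_adams_mult:
  assumes "k \<ge> 1" "m \<ge> 1" "r \<ge> 1"
  shows "act n r (adams r k) (act n r (adams r m) f) = act n r (adams r (k * m)) f"
proof -
  have km: "k * m \<ge> 1" using assms by simp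
  show ?thesis
    unfolding act_adams[OF assms(1,3)] act_adams[OF assms(2,3)] act_adams[OF km assms(3)]
      kernel_map_comp[OF finite_inj_words finite_inj_words]
    by (rule kernel_map_cong) (rule shuffle_kernel_mult[OF assms(2)])
qed

section \<open>The boundary and the Adams elements\<close>

definition skip :: "nat \<Rightarrow> nat \<Rightarrow> nat" where
  "skip j p = (if p < j then p else Suc p)"

definition col_delete :: "nat \<Rightarrow> nat \<Rightarrow> (nat \<Rightarrow> nat) \<Rightarrow> nat \<Rightarrow> nat" where
  "col_delete r j c = (\<lambda>p. if p < r - 1 then c (skip j p) else undefined)"

definition col_insert :: "nat \<Rightarrow> nat \<Rightarrow> nat \<Rightarrow> (nat \<Rightarrow> nat) \<Rightarrow> nat \<Rightarrow> nat" where
  "col_insert r j b c' =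
    (\<lambda>p. if p < r then (if p = j then b else c' (if p < j then p else p - 1)) else undefined)"

lemma skip_less_iff: "skip j x < skip j y \<longleftrightarrow> x < y"
  by (auto simp: skip_def)

lemma skip_neq: "skip j x \<noteq> j"
  by (auto simp: skip_def)

lemma skip_neq': "j \<noteq> skip j x"
  by (auto simp: skip_def)

lemma skip_less: "j < r \<Longrightarrow> p < r - 1 \<Longrightarrow> skip j p < r"
  by (auto simp: skip_def)

lemma skip_inj: "inj (skip j)"
  by (auto simp: inj_def skip_def split: if_splits)

lemma skip_surj: "q \<noteq> j \<Longrightarrow> q = skip j (if q < j then q else q - 1)"
  by (auto simp: skip_def)

lemma length_del_at: "i < length xs \<Longrightarrow> length (del_at i xs) = length xs - 1"
  by (simp add: del_at_def)

lemma nth_del_at: "i < length xs \<Longrightarrow> t < length xs - 1 \<Longrightarrow> del_at i xs ! t = xs ! skip i t"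
  by (auto simp: del_at_def nth_append skip_def min_def)

lemma del_at_in_inj_words:
  assumes w: "w \<in> inj_words n r" and j: "j < r"
  shows "del_at j w \<in> inj_words n (r - 1)"
proof -
  have w': "distinct w" "set w \<subseteq> {1..n}" "length w = r" using w by (auto simp: inj_words_def)
  then have "distinct (take j w @ (w ! j) # drop (Suc j) w)" using j by (simp add: id_take_nth_drop[symmetric])
  moreover have "set (take j w @ drop (Suc j) w) \<subseteq> set w"
    by (auto dest: in_set_takeD in_set_dropD)
  ultimately show ?thesis using w' j by (auto simp: inj_words_def del_at_def)
qed

lemma col_delete_in_colourings:
  "c \<in> colourings r m \<Longrightarrow> j < r \<Longrightarrow> col_delete r j c \<in> colourings (r - 1) m"
  by (intro colouringsI) (auto simp: col_delete_def colouringsD(1) skip_less)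

lemma col_rank_skip_eq:
  assumes j: "j < r" and p': "p' < r - 1"
  shows "col_rank r c (skip j p') =
    col_rank (r - 1) (col_delete r j c) p' + (if col_less c j (skip j p') then 1 else 0)"
proof -
  let ?c' = "col_delete r j c"
  let ?p = "skip j p'"
  let ?S' = "{q'. q' < r - 1 \<and> col_less ?c' q' p'}"
  have pr: "?p < r" using skip_less[OF j p'] .
  have col_less_skip: "col_less c (skip j q') ?p \<longleftrightarrow> col_less ?c' q' p'" if "q' < r - 1" for q'
    using that p' skip_less_iff[of j q' p'] unfolding col_less_def col_delete_def by auto
  have "{q. q < r \<and> q \<noteq> j \<and> col_less c q ?p} = skip j ` ?S'"
  proof
    show "{q. q < r \<and> q \<noteq> j \<and> col_less c q ?p} \<subseteq> skip j ` ?S'"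
    proof clarify
      fix q assume q: "q < r" "q \<noteq> j" "col_less c q ?p"
      let ?q' = "if q < j then q else q - 1"
      have e: "q = skip j ?q'" using skip_surj[OF q(2)] .
      have "?q' < r - 1" using q j by auto
      moreover have "col_less ?c' ?q' p'" using col_less_skip[OF calculation] q(3) e by simp
      ultimately show "q \<in> skip j ` ?S'" using e by blast
    qed
    show "skip j ` ?S' \<subseteq> {q. q < r \<and> q \<noteq> j \<and> col_less c q ?p}"
      using col_less_skip skip_less[OF j] skip_neq by auto
  qed
  then have card_S: "card {q. q < r \<and> q \<noteq> j \<and> col_less c q ?p} = col_rank (r - 1) ?c' p'"
    using p' by (simp add: card_image inj_on_subset[OF skip_inj] col_rank_def)
  show ?thesis
  proof (cases "col_less c j ?p")
    case True
    then have "{q. q < r \<and> col_less c q ?p} = insert j {q. q < r \<and> q \<noteq> j \<and> col_less c q ?p}"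
      using j by auto
    then show ?thesis using True pr card_S by (simp add: col_rank_def)
  next
    case False
    then have "{q. q < r \<and> col_less c q ?p} = {q. q < r \<and> q \<noteq> j \<and> col_less c q ?p}" by auto
    then show ?thesis using False pr card_S by (simp add: col_rank_def)
  qed
qed

lemma col_rank_skip:
  assumes j: "j < r" and p': "p' < r - 1"
  shows "col_rank r c (skip j p') = skip (col_rank r c j) (col_rank (r - 1) (col_delete r j c) p')"
proof -
  let ?p = "skip j p'"
  have pr: "?p < r" using skip_less[OF j p'] .
  note rank = col_rank_skip_eq[OF j p', of c]
  have iff: "col_less c j ?p \<longleftrightarrow> col_rank r c j < col_rank r c ?p"
    using col_rank_less_iff[OF pr j] by simp
  have ne: "col_rank r c j \<noteq> col_rank r c ?p"
    using col_rank_inj skip_neq by metis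
  show ?thesis
  proof (cases "col_less c j ?p")
    case True
    then show ?thesis using rank iff by (simp add: skip_def)
  next
    case False
    then show ?thesis using rank iff ne by (simp add: skip_def)
  qed
qed

lemma col_sort_skip:
  assumes j: "j < r" and t: "t < r - 1"
  shows "col_sort r c (skip (col_rank r c j) t) = skip j (col_sort (r - 1) (col_delete r j c) t)"
  using col_rank_skip[OF j col_sort_less[OF t], of c] by (metis col_rank_col_sort col_sort_col_rank)

lemma del_at_perm_word_col_sort:
  assumes lw: "length w = r" and j: "j < r"
  shows "del_at (col_rank r c j) (perm_word (col_sort r c) w) =
    perm_word (col_sort (r - 1) (col_delete r j c)) (del_at j w)"
proof (rule nth_equalityI)
  let ?i = "col_rank r c j"
  let ?c' = "col_delete r j c"
  have i: "?i < r" using col_rank_less[OF j] .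
  show "length (del_at ?i (perm_word (col_sort r c) w)) = length (perm_word (col_sort (r - 1) ?c') (del_at j w))"
    using lw i j by (simp add: length_del_at)
  fix t assume "t < length (del_at ?i (perm_word (col_sort r c) w))"
  then have t: "t < r - 1" using lw i by (simp add: length_del_at)
  have "del_at ?i (perm_word (col_sort r c) w) ! t = w ! col_sort r c (skip ?i t)"
    using lw i t skip_less[OF i t] by (simp add: nth_del_at nth_perm_word)
  also have "\<dots> = w ! skip j (col_sort (r - 1) ?c' t)" using col_sort_skip[OF j t] by simp
  also have "\<dots> = perm_word (col_sort (r - 1) ?c') (del_at j w) ! t"
    using lw j t col_sort_less[OF t] by (simp add: nth_del_at nth_perm_word length_del_at)
  finally show "del_at ?i (perm_word (col_sort r c) w) ! t = perm_word (col_sort (r - 1) ?c') (del_at j w) ! t" .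
qed

lemma inversions_col_delete:
  assumes j: "j < r"
  shows "inversions r c = (\<lambda>(x, y). (skip j x, skip j y)) ` inversions (r - 1) (col_delete r j c)
    \<union> (\<lambda>x. (x, j)) ` {x. x < j \<and> c j < c x} \<union> (\<lambda>y. (j, y)) ` {y. j < y \<and> y < r \<and> c y < c j}"
    (is "_ = ?A \<union> ?B \<union> ?C")
proof
  show "inversions r c \<subseteq> ?A \<union> ?B \<union> ?C"
  proof clarify
    fix x y assume xy: "(x, y) \<in> inversions r c" and nB: "(x, y) \<notin> ?B" and nC: "(x, y) \<notin> ?C"
    have h: "x < y" "y < r" "c y < c x" using xy by (auto simp: inversions_def)
    have "x \<noteq> j" "y \<noteq> j" using nB nC h by auto
    let ?x' = "if x < j then x else x - 1" and ?y' = "if y < j then y else y - 1"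
    have ex: "x = skip j ?x'" and ey: "y = skip j ?y'"
      using skip_surj \<open>x \<noteq> j\<close> \<open>y \<noteq> j\<close> by auto
    have "?x' < ?y'" using h ex ey skip_less_iff by metis
    moreover have "?y' < r - 1" using h j \<open>y \<noteq> j\<close> by auto
    moreover have "col_delete r j c ?y' < col_delete r j c ?x'"
      using h ex ey calculation by (simp add: col_delete_def)
    ultimately have "(?x', ?y') \<in> inversions (r - 1) (col_delete r j c)" by (simp add: inversions_def)
    then show "(x, y) \<in> ?A" using ex ey by (metis (no_types, lifting) case_prod_conv image_eqI)
  qed
  show "?A \<union> ?B \<union> ?C \<subseteq> inversions r c"
    using j skip_less_iff skip_less[OF j] skip_neq'
    by (auto simp: inversions_def col_delete_def)
qed

lemma card_inversions_col_delete:
  assumes j: "j < r"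
  shows "card (inversions r c) = card (inversions (r - 1) (col_delete r j c))
    + card {x. x < j \<and> c j < c x} + card {y. j < y \<and> y < r \<and> c y < c j}"
proof -
  let ?A = "(\<lambda>(x, y). (skip j x, skip j y)) ` inversions (r - 1) (col_delete r j c)"
  let ?B = "(\<lambda>x. (x, j)) ` {x. x < j \<and> c j < c x}"
  let ?C = "(\<lambda>y. (j, y)) ` {y. j < y \<and> y < r \<and> c y < c j}"
  have fin: "finite ?A" "finite ?B" "finite ?C"
    using finite_inversions by (auto intro: finite_subset[of _ "{..<r}"])
  have "?A \<inter> ?B = {}" "(?A \<union> ?B) \<inter> ?C = {}" using skip_neq skip_neq' by auto
  then have "card (inversions r c) = card ?A + card ?B + card ?C"
    unfolding inversions_col_delete[OF j] using fin by (simp add: card_Un_disjoint)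
  moreover have "card ?A = card (inversions (r - 1) (col_delete r j c))"
    by (rule card_image) (auto simp: inj_on_def skip_inj[THEN injD])
  moreover have "card ?B = card {x. x < j \<and> c j < c x}" by (rule card_image) (auto simp: inj_on_def)
  moreover have "card ?C = card {y. j < y \<and> y < r \<and> c y < c j}" by (rule card_image) (auto simp: inj_on_def)
  ultimately show ?thesis by simp
qed

lemma card_less_eq_sum: "card {q. q < (r::nat) \<and> P q} = (\<Sum>q<r. if P q then 1 else 0 :: nat)"
proof -
  have "card {q. q < r \<and> P q} = card {q \<in> {..<r}. P q}" by (rule arg_cong[where f = card]) auto
  also have "\<dots> = (\<Sum>q\<in>{q \<in> {..<r}. P q}. 1)" by simp
  also have "\<dots> = (\<Sum>q<r. if P q then 1 else 0)" by (rule sum.inter_filter) simp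
  finally show ?thesis .
qed

text \<open>For \<open>q < j\<close> exactly one of \<^term>\<open>col_less c q j\<close> and \<open>c j < c q\<close> holds; for \<open>q > j\<close>,
  \<^term>\<open>col_less c q j\<close> holds iff \<open>(j, q)\<close> is an inversion.\<close>
lemma even_col_rank_inversions_at:
  assumes j: "j < r"
  shows "even (col_rank r c j + j + card {x. x < j \<and> c j < c x} + card {y. j < y \<and> y < r \<and> c y < c j})"
proof -
  have "{q. q < r \<and> q < j} = {..<j}" "{x. x < j \<and> c j < c x} = {q. q < r \<and> (q < j \<and> c j < c q)}"
    "{y. j < y \<and> y < r \<and> c y < c j} = {q. q < r \<and> (j < q \<and> c q < c j)}"
    using j by auto
  then have "col_rank r c j + j + card {x. x < j \<and> c j < c x} + card {y. j < y \<and> y < r \<and> c y < c j} =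
      (\<Sum>q<r. (if col_less c q j then 1 else 0) + (if q < j then 1 else 0)
        + (if q < j \<and> c j < c q then 1 else 0) + (if j < q \<and> c q < c j then 1 else 0))"
    using j card_less_eq_sum[of r "\<lambda>q. q < j"] card_less_eq_sum[of r "\<lambda>q. q < j \<and> c j < c q"]
      card_less_eq_sum[of r "\<lambda>q. j < q \<and> c q < c j"] card_less_eq_sum[of r "\<lambda>q. col_less c q j"]
    by (simp add: col_rank_def sum.distrib)
  moreover have "even ((if col_less c q j then 1 else 0) + (if q < j then 1 else 0)
        + (if q < j \<and> c j < c q then 1 else 0) + (if j < q \<and> c q < c j then 1 else (0::nat)))" for q
    by (cases q j rule: linorder_cases) (auto simp: col_less_def)
  ultimately show ?thesis by (simp add: dvd_sum)
qed

lemma neg_one_power_eq_if_even_add: "even (a + b) \<Longrightarrow> (-1 :: 'a :: ring_1) ^ a = (-1) ^ b"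
  by (auto simp: minus_one_power_iff)

lemma sign_col_sort_col_delete:
  assumes j: "j < r"
  shows "of_int (sign (col_sort r c)) * (-1) ^ col_rank r c j =
    (of_int (sign (col_sort (r - 1) (col_delete r j c))) * (-1) ^ j :: complex)"
proof -
  let ?N = "card (inversions (r - 1) (col_delete r j c))"
  have eq: "(card (inversions r c) + col_rank r c j) + (?N + j) =
      (col_rank r c j + j + card {x. x < j \<and> c j < c x} + card {y. j < y \<and> y < r \<and> c y < c j}) + 2 * ?N"
    unfolding card_inversions_col_delete[OF j] by simp
  have "even ((card (inversions r c) + col_rank r c j) + (?N + j))"
    unfolding eq using even_col_rank_inversions_at[OF j, of c] by simp
  then have "((-1)::complex) ^ (card (inversions r c) + col_rank r c j) = (-1) ^ (?N + j)"
    by (rule neg_one_power_eq_if_even_add)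
  then show ?thesis unfolding sign_col_sort by (simp add: power_add)
qed

lemma bij_betw_col_delete:
  assumes j: "j < r"
  shows "bij_betw (\<lambda>c. (c j, col_delete r j c)) (colourings r m) ({..<m} \<times> colourings (r - 1) m)"
    (is "bij_betw ?f ?A ?B")
proof (rule bij_betw_byWitness[where f' = "\<lambda>(b, c'). col_insert r j b c'"])
  show "\<forall>c\<in>?A. (\<lambda>(b, c'). col_insert r j b c') (?f c) = c"
    using j colouringsD(2) by (fastforce simp: col_insert_def col_delete_def skip_def)
  show "\<forall>y\<in>?B. ?f ((\<lambda>(b, c'). col_insert r j b c') y) = y"
    using j colouringsD(2) by (fastforce simp: col_insert_def col_delete_def skip_def)
  show "?f ` ?A \<subseteq> ?B"
    using j colouringsD(1) col_delete_in_colourings by blast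
  show "(\<lambda>(b, c'). col_insert r j b c') ` ?B \<subseteq> ?A"
  proof clarify
    fix b c' assume b: "b < m" and c': "c' \<in> colourings (r - 1) m"
    show "col_insert r j b c' \<in> colourings r m"
    proof (rule colouringsI)
      fix p assume p: "p < r"
      show "col_insert r j b c' p < m"
      proof (cases "p = j")
        case True
        then show ?thesis using b p by (simp add: col_insert_def)
      next
        case False
        then have "(if p < j then p else p - 1) < r - 1" using p j by auto
        then show ?thesis using False p colouringsD(1)[OF c'] by (simp add: col_insert_def)
      qed
    qed (simp add: col_insert_def)
  qed
qed

lemma sum_colourings_del_at_perm_word:
  fixes G :: "nat list \<Rightarrow> complex"
  assumes lw: "length w = r"
  shows "(\<Sum>c\<in>colourings r m. \<Sum>i<r.
            of_int (sign (col_sort r c)) * (-1) ^ i * G (del_at i (perm_word (col_sort r c) w))) =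
         of_nat m * (\<Sum>j<r. \<Sum>c'\<in>colourings (r - 1) m.
            of_int (sign (col_sort (r - 1) c')) * (-1) ^ j * G (perm_word (col_sort (r - 1) c') (del_at j w)))"
    (is "?lhs = _")
proof -
  define H where "H j c' = (of_int (sign (col_sort (r - 1) c')) * (-1) ^ j *
    G (perm_word (col_sort (r - 1) c') (del_at j w)) :: complex)" for j c'
  have "?lhs = (\<Sum>c\<in>colourings r m. \<Sum>j<r. of_int (sign (col_sort r c)) * (-1) ^ col_rank r c j *
      G (del_at (col_rank r c j) (perm_word (col_sort r c) w)))"
    by (intro sum.cong refl sum.reindex_bij_betw[symmetric] permutes_imp_bij col_rank_permutes)
  also have "\<dots> = (\<Sum>c\<in>colourings r m. \<Sum>j<r. H j (col_delete r j c))"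
    unfolding H_def
    by (intro sum.cong refl) (simp add: sign_col_sort_col_delete del_at_perm_word_col_sort[OF lw])
  also have "\<dots> = (\<Sum>j<r. \<Sum>c\<in>colourings r m. H j (col_delete r j c))"
    by (rule sum.swap)
  also have "\<dots> = (\<Sum>j<r. \<Sum>(b, c')\<in>{..<m} \<times> colourings (r - 1) m. H j c')"
  proof (rule sum.cong[OF refl])
    fix j assume "j \<in> {..<r}"
    then have j: "j < r" by simp
    show "(\<Sum>c\<in>colourings r m. H j (col_delete r j c)) = (\<Sum>(b, c')\<in>{..<m} \<times> colourings (r - 1) m. H j c')"
      using sum.reindex_bij_betw[OF bij_betw_col_delete[OF j], of "\<lambda>(b, c'). H j c'" m] by simp
  qed
  also have "\<dots> = of_nat m * (\<Sum>j<r. \<Sum>c'\<in>colourings (r - 1) m. H j c')"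
    by (simp add: sum.cartesian_product[symmetric] sum_distrib_left)
  finally show ?thesis unfolding H_def .
qed

lemma shuffle_kernel_bd_kernel:
  assumes w: "w \<in> inj_words n r"
  shows "(\<Sum>u\<in>inj_words n r. shuffle_kernel r m w u * bd_kernel r u v) =
         of_nat m * (\<Sum>u\<in>inj_words n (r - 1). bd_kernel r w u * shuffle_kernel (r - 1) m u v)"
proof -
  have lw: "length w = r" using w by (simp add: inj_words_def)
  let ?G = "\<lambda>x. if x = v then 1 else (0::complex)"
  let ?s = "\<lambda>c. of_int (sign (col_sort r c)) :: complex"
  have "(\<Sum>u\<in>inj_words n r. shuffle_kernel r m w u * bd_kernel r u v)
      = (\<Sum>c\<in>colourings r m. ?s c * (\<Sum>u\<in>inj_words n r.
          (if perm_word (col_sort r c) w = u then 1 else 0) * bd_kernel r u v))"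
    unfolding shuffle_kernel_def
    by (simp add: sum_distrib_right sum_distrib_left mult.assoc sum.swap[of _ "inj_words n r"])
  also have "\<dots> = (\<Sum>c\<in>colourings r m. ?s c * bd_kernel r (perm_word (col_sort r c) w) v)"
    by (intro sum.cong refl arg_cong2[where f = "(*)"] sum_indicator_mult finite_inj_words
        perm_word_in_inj_words[OF w col_sort_permutes])
  also have "\<dots> = (\<Sum>c\<in>colourings r m. \<Sum>i<r. ?s c * (-1) ^ i * ?G (del_at i (perm_word (col_sort r c) w)))"
    unfolding bd_kernel_def by (simp add: sum_distrib_left if_distrib cong: if_cong)
  also have "\<dots> = of_nat m * (\<Sum>j<r. \<Sum>c'\<in>colourings (r - 1) m.
      of_int (sign (col_sort (r - 1) c')) * (-1) ^ j * ?G (perm_word (col_sort (r - 1) c') (del_at j w)))"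
    by (rule sum_colourings_del_at_perm_word[OF lw])
  also have "(\<Sum>j<r. \<Sum>c'\<in>colourings (r - 1) m.
      of_int (sign (col_sort (r - 1) c')) * (-1) ^ j * ?G (perm_word (col_sort (r - 1) c') (del_at j w)))
      = (\<Sum>j<r. (-1) ^ j * shuffle_kernel (r - 1) m (del_at j w) v)"
    unfolding shuffle_kernel_def by (simp add: sum_distrib_left mult_ac)
  also have "\<dots> = (\<Sum>j<r. \<Sum>u\<in>inj_words n (r - 1).
      (if del_at j w = u then (-1) ^ j else 0) * shuffle_kernel (r - 1) m u v)"
  proof (rule sum.cong[OF refl])
    fix j assume "j \<in> {..<r}"
    then have dw: "del_at j w \<in> inj_words n (r - 1)" using del_at_in_inj_words[OF w] by simp
    have "(\<Sum>u\<in>inj_words n (r - 1). (if del_at j w = u then (-1) ^ j else 0) * shuffle_kernel (r - 1) m u v)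
        = (-1) ^ j * (\<Sum>u\<in>inj_words n (r - 1). (if del_at j w = u then 1 else 0) * shuffle_kernel (r - 1) m u v)"
      unfolding sum_distrib_left by (intro sum.cong) auto
    then show "(-1) ^ j * shuffle_kernel (r - 1) m (del_at j w) v = (\<Sum>u\<in>inj_words n (r - 1).
        (if del_at j w = u then (-1) ^ j else 0) * shuffle_kernel (r - 1) m u v)"
      using sum_indicator_mult[OF finite_inj_words dw] by simp
  qed
  also have "\<dots> = (\<Sum>u\<in>inj_words n (r - 1). bd_kernel r w u * shuffle_kernel (r - 1) m u v)"
    unfolding bd_kernel_def by (subst sum.swap) (simp add: sum_distrib_right)
  finally show ?thesis .
qed

lemma bd_act_adams:
  assumes r: "r \<ge> 2" and m: "m \<ge> 1"
  shows "bd n r (act n r (adams r m) f) = (\<lambda>v. of_nat m * act n (r - 1) (adams (r - 1) m) (bd n r f) v)"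
proof -
  have r1: "r \<ge> 1" "r - 1 \<ge> 1" using r by auto
  have "bd n r (act n r (adams r m) f) =
      kernel_map (inj_words n r) (\<lambda>w v. \<Sum>u\<in>inj_words n r. shuffle_kernel r m w u * bd_kernel r u v) f"
    unfolding bd_eq_kernel_map act_adams[OF m r1(1)] by (rule kernel_map_comp[OF finite_inj_words finite_inj_words])
  also have "\<dots> = kernel_map (inj_words n r)
      (\<lambda>w v. of_nat m * (\<Sum>u\<in>inj_words n (r - 1). bd_kernel r w u * shuffle_kernel (r - 1) m u v)) f"
    by (rule kernel_map_cong) (rule shuffle_kernel_bd_kernel)
  also have "\<dots> = (\<lambda>v. of_nat m * kernel_map (inj_words n r)
      (\<lambda>w v. \<Sum>u\<in>inj_words n (r - 1). bd_kernel r w u * shuffle_kernel (r - 1) m u v) f v)"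
    unfolding kernel_map_def by (simp add: sum_distrib_left mult_ac)
  also have "kernel_map (inj_words n r)
      (\<lambda>w v. \<Sum>u\<in>inj_words n (r - 1). bd_kernel r w u * shuffle_kernel (r - 1) m u v) f
      = act n (r - 1) (adams (r - 1) m) (bd n r f)"
    unfolding bd_eq_kernel_map act_adams[OF m r1(2)]
    by (rule kernel_map_comp[OF finite_inj_words finite_inj_words, symmetric])
  finally show ?thesis .
qed

section \<open>The Eulerian idempotents\<close>

lemma descents_less: "r \<ge> 1 \<Longrightarrow> descents r s < r"
proof -
  assume r: "r \<ge> 1"
  have "{i. Suc i < r \<and> s (Suc i) < s i} \<subseteq> {..<r - 1}" by auto
  then have "descents r s \<le> card {..<r - 1}" unfolding descents_def by (rule card_mono[rotated]) auto
  then show ?thesis using r by simp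
qed

definition binomial_poly :: "nat \<Rightarrow> nat \<Rightarrow> complex poly" where
  "binomial_poly r d = smult (1 / fact r) (\<Prod>i<r. [: of_int (int i - int d), 1 :])"

lemma poly_binomial_poly: "poly (binomial_poly r d) x = (\<Prod>i<r. of_int (int i - int d) + x) / fact r"
  unfolding binomial_poly_def by (simp add: poly_prod)

lemma degree_binomial_poly: "degree (binomial_poly r d) \<le> r"
proof -
  have "degree (\<Prod>i<r. [: of_int (int i - int d), 1 :] :: complex poly) \<le>
      (\<Sum>i<r. degree [: of_int (int i - int d) :: complex, 1 :])"
    using degree_prod_sum_le[of "{..<r}" "\<lambda>i. [: of_int (int i - int d) :: complex, 1 :]"] by (simp add: o_def)
  also have "\<dots> = r" by simp
  finally show ?thesis unfolding binomial_poly_def by (meson degree_smult_le order.trans)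
qed

lemma coeff_0_binomial_poly: "d < r \<Longrightarrow> coeff (binomial_poly r d) 0 = 0"
proof -
  assume d: "d < r"
  have "(\<Prod>i<r. of_int (int i - int d) + (0::complex)) = 0"
    using d by (intro prod_zero) (auto intro!: bexI[of _ d])
  then show ?thesis using poly_binomial_poly[of r d 0] by (simp add: poly_0_coeff_0)
qed

lemma poly_binomial_poly_of_nat:
  assumes k: "k \<ge> 1" and d: "d < r"
  shows "poly (binomial_poly r d) (of_nat k) = (if d < k then of_nat ((r + k - 1 - d) choose r) else 0)"
proof (cases "d < k")
  case True
  have "(\<Prod>i<r. of_int (int i - int d) + (of_nat k :: complex)) = (\<Prod>i<r. of_nat (k - d) + of_nat i)"
    using True by (intro prod.cong refl) (simp add: of_nat_diff)
  also have "\<dots> = pochhammer (of_nat (k - d)) r" by (simp add: pochhammer_prod atLeast0LessThan)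
  finally have "poly (binomial_poly r d) (of_nat k) = pochhammer (of_nat (k - d)) r / fact r"
    by (simp add: poly_binomial_poly)
  moreover have "(of_nat ((r + k - 1 - d) choose r) :: complex) = pochhammer (of_nat (k - d)) r / fact r"
    using True by (simp add: binomial_gbinomial gbinomial_pochhammer' of_nat_diff)
  ultimately show ?thesis using True by simp
next
  case False
  have "(\<Prod>i<r. of_int (int i - int d) + (of_nat k :: complex)) = 0"
    using False d by (intro prod_zero) (auto intro!: bexI[of _ "d - k"])
  then show ?thesis using False by (simp add: poly_binomial_poly)
qed

definition euler_coeff :: "nat \<Rightarrow> nat \<Rightarrow> (nat \<Rightarrow> nat) \<Rightarrow> complex" where
  "euler_coeff r j s = (if s permutes {..<r} \<and> j \<in> {1..r}
     then of_int (sign s) * coeff (binomial_poly r (descents r s)) j else 0)"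

lemma poly_eq_sum_coeffs:
  fixes p :: "complex poly"
  assumes "degree p \<le> r" "coeff p 0 = 0"
  shows "poly p x = (\<Sum>j=1..r. x ^ j * coeff p j)"
proof -
  have "poly p x = (\<Sum>i\<le>r. coeff p i * x ^ i)"
    unfolding poly_altdef by (rule sum.mono_neutral_left) (use assms in \<open>auto simp: coeff_eq_0\<close>)
  also have "\<dots> = (\<Sum>i\<in>insert 0 {1..r}. coeff p i * x ^ i)"
    by (rule sum.cong) auto
  finally show ?thesis using assms by (simp add: mult.commute)
qed

lemma adams_eq_sum_euler_coeff:
  assumes k: "k \<ge> 1" and r: "r \<ge> 1"
  shows "adams r k s = (\<Sum>j=1..r. of_nat k ^ j * euler_coeff r j s)"
proof (cases "s permutes {..<r}")
  case True
  let ?d = "descents r s"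
  have d: "?d < r" using descents_less[OF r] .
  have "(\<Sum>j=1..r. of_nat k ^ j * euler_coeff r j s) =
      of_int (sign s) * (\<Sum>j=1..r. of_nat k ^ j * coeff (binomial_poly r ?d) j)"
    unfolding euler_coeff_def using True by (simp add: sum_distrib_left mult_ac)
  also have "\<dots> = of_int (sign s) * poly (binomial_poly r ?d) (of_nat k)"
    using poly_eq_sum_coeffs[OF degree_binomial_poly coeff_0_binomial_poly[OF d]] by simp
  finally show ?thesis
    unfolding signed_eul_lambda_eq[OF k] poly_binomial_poly_of_nat[OF k d] using True by simp
next
  case False
  then show ?thesis unfolding signed_eul_lambda_eq[OF k] euler_coeff_def by simp
qed

lemma coeffs_eq_if_power_sums_eq:
  fixes a b :: "nat \<Rightarrow> complex"
  assumes h: "\<And>k. k \<ge> 1 \<Longrightarrow> (\<Sum>j=1..r. of_nat k ^ j * a j) = (\<Sum>j=1..r. of_nat k ^ j * b j)"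
    and j: "j \<in> {1..r}"
  shows "a j = b j"
proof -
  define q where "q = (\<Sum>i=1..r. monom (a i - b i) i)"
  have "poly q (of_nat k) = 0" if "k \<ge> 1" for k
    using h[OF that] unfolding q_def
    by (simp add: poly_sum poly_monom algebra_simps sum_subtractf)
  then have "of_nat ` {1..} \<subseteq> {x. poly q x = (0::complex)}" by auto
  moreover have "infinite (of_nat ` {1..} :: complex set)"
  proof
    assume "finite (of_nat ` {1..} :: complex set)"
    then have "finite {1::nat..}" by (rule finite_imageD) (simp add: inj_on_def)
    then show False using infinite_Ici by blast
  qed
  ultimately have "q = 0" using poly_roots_finite finite_subset by blast
  then have "coeff q j = 0" by simp
  moreover have "coeff q j = a j - b j" unfolding q_def using j by (simp add: coeff_sum coeff_monom)
  ultimately show ?thesis by simp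
qed

lemma euler_e_eq_euler_coeff:
  assumes r: "r \<ge> 1"
  shows "euler_e r = euler_coeff r"
  unfolding euler_e_def
proof (rule the_equality)
  show "(\<forall>j. j \<notin> {1..r} \<longrightarrow> euler_coeff r j = (\<lambda>\<sigma>. 0)) \<and>
        (\<forall>k::nat. k \<ge> 1 \<longrightarrow> adams r k = (\<lambda>\<sigma>. \<Sum>j=1..r. of_nat k ^ j * euler_coeff r j \<sigma>))"
    using adams_eq_sum_euler_coeff[OF _ r] by (auto simp: euler_coeff_def)
next
  fix e assume e: "(\<forall>j. j \<notin> {1..r} \<longrightarrow> e j = (\<lambda>\<sigma>. 0)) \<and>
        (\<forall>k::nat. k \<ge> 1 \<longrightarrow> adams r k = (\<lambda>\<sigma>. \<Sum>j=1..r. of_nat k ^ j * e j \<sigma>))"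
  show "e = euler_coeff r"
  proof (intro ext)
    fix j s
    show "e j s = euler_coeff r j s"
    proof (cases "j \<in> {1..r}")
      case True
      show ?thesis
      proof (rule coeffs_eq_if_power_sums_eq[OF _ True])
        fix k :: nat assume k: "k \<ge> 1"
        then have "(\<Sum>i=1..r. of_nat k ^ i * e i s) = adams r k s" using e by metis
        then show "(\<Sum>i=1..r. of_nat k ^ i * e i s) = (\<Sum>i=1..r. of_nat k ^ i * euler_coeff r i s)"
          using adams_eq_sum_euler_coeff[OF k r] by simp
      qed
    qed (use e in \<open>auto simp: euler_coeff_def\<close>)
  qed
qed

lemma act_adams_eq_sum:
  assumes "k \<ge> 1" "r \<ge> 1"
  shows "act n r (adams r k) f = (\<lambda>v. \<Sum>j=1..r. of_nat k ^ j * act n r (euler_e r j) f v)"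
proof -
  have "adams r k = (\<lambda>s. \<Sum>j=1..r. of_nat k ^ j * euler_e r j s)"
    using adams_eq_sum_euler_coeff[OF assms] euler_e_eq_euler_coeff[OF assms(2)] by simp
  then show ?thesis using act_lincomb_left[of "{1..r}" n r "\<lambda>j. of_nat k ^ j" "euler_e r" f] by simp
qed

lemma act_euler_e_orthogonal:
  assumes r: "r \<ge> 1" and i: "i \<in> {1..r}" and j: "j \<in> {1..r}"
  shows "act n r (euler_e r i) (act n r (euler_e r j) f) =
    (if i = j then act n r (euler_e r j) f else (\<lambda>_. 0))"
proof
  fix v
  let ?X = "\<lambda>i j. act n r (euler_e r i) (act n r (euler_e r j) f) v"
  let ?Y = "\<lambda>i. act n r (euler_e r i) f v"
  have adams_product: "(\<Sum>i=1..r. of_nat k ^ i * (\<Sum>j=1..r. of_nat m ^ j * ?X i j)) =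
      (\<Sum>i=1..r. of_nat k ^ i * (of_nat m ^ i * ?Y i))" if k: "k \<ge> 1" and m: "m \<ge> 1" for k m
  proof -
    have km: "k * m \<ge> 1" using k m by simp
    have inner: "act n r (euler_e r i) (act n r (adams r m) f) v = (\<Sum>j=1..r. of_nat m ^ j * ?X i j)" for i
      unfolding act_adams_eq_sum[OF m r] act_lincomb[OF finite_atLeastAtMost] by simp
    have "(\<Sum>i=1..r. of_nat k ^ i * (\<Sum>j=1..r. of_nat m ^ j * ?X i j)) =
        act n r (adams r k) (act n r (adams r m) f) v"
      by (simp only: act_adams_eq_sum[OF k r] inner)
    also have "\<dots> = act n r (adams r (k * m)) f v"
      using act_adams_mult[OF k m r] by simp
    also have "\<dots> = (\<Sum>i=1..r. of_nat k ^ i * (of_nat m ^ i * ?Y i))"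
      unfolding act_adams_eq_sum[OF km r] by (simp add: power_mult_distrib mult.assoc)
    finally show ?thesis .
  qed
  have "(\<Sum>j=1..r. of_nat m ^ j * ?X i j) = (\<Sum>j=1..r. of_nat m ^ j * (if j = i then ?Y i else 0))"
    if m: "m \<ge> 1" for m
  proof -
    have "(\<Sum>j=1..r. of_nat m ^ j * ?X i j) = of_nat m ^ i * ?Y i"
      using coeffs_eq_if_power_sums_eq[where a = "\<lambda>i. \<Sum>j=1..r. of_nat m ^ j * ?X i j"
          and b = "\<lambda>i. of_nat m ^ i * ?Y i", OF adams_product[OF _ m] i] .
    then show ?thesis using i by (simp add: if_distrib cong: if_cong)
  qed
  from coeffs_eq_if_power_sums_eq[OF this j] show "?X i j = (if i = j then act n r (euler_e r j) f else (\<lambda>_. 0)) v"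
    by auto
qed

lemma shuffle_kernel_1:
  assumes "length w = r"
  shows "shuffle_kernel r 1 w v = (if w = v then 1 else 0)"
proof -
  define c0 where "c0 = (\<lambda>p. if p < r then 0 else undefined :: nat)"
  have "colourings r 1 = {c0}"
  proof
    show "colourings r 1 \<subseteq> {c0}"
    proof
      fix c assume c: "c \<in> colourings r 1"
      have "c = c0"
      proof
        fix p
        show "c p = c0 p" using colouringsD[OF c, of p] by (auto simp: c0_def)
      qed
      then show "c \<in> {c0}" by simp
    qed
    show "{c0} \<subseteq> colourings r 1" by (auto intro!: colouringsI simp: c0_def)
  qed
  moreover have "col_rank r c0 = id"
  proof
    fix p
    show "col_rank r c0 p = id p"
    proof (cases "p < r")
      case True
      then have "{q. q < r \<and> col_less c0 q p} = {..<p}" by (auto simp: col_less_def c0_def)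
      then show ?thesis using True by (simp add: col_rank_def)
    qed (simp add: col_rank_def)
  qed
  then have "col_sort r c0 = id" unfolding col_sort_def by (simp add: inv_id)
  moreover have "perm_word id w = w" by (simp add: perm_word_def map_nth)
  ultimately show ?thesis by (simp add: shuffle_kernel_def)
qed

lemma act_adams_1:
  assumes r: "r \<ge> 1" and f: "f \<in> M n r"
  shows "act n r (adams r 1) f = f"
proof
  fix v
  have "act n r (adams r 1) f v = (\<Sum>w\<in>inj_words n r. if w = v then f w else 0)"
    unfolding act_adams[OF order.refl r] kernel_map_def
  proof (rule sum.cong[OF refl])
    fix w assume "w \<in> inj_words n r"
    then have "length w = r" by (simp add: inj_words_def)
    then show "f w * shuffle_kernel r 1 w v = (if w = v then f w else 0)"
      using shuffle_kernel_1[of w r v] by simp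
  qed
  also have "\<dots> = f v" using f by (auto simp: M_def finite_inj_words)
  finally show "act n r (adams r 1) f v = f v" .
qed

lemma sum_act_euler_e:
  assumes "r \<ge> 1" "f \<in> M n r"
  shows "(\<lambda>v. \<Sum>j=1..r. act n r (euler_e r j) f v) = f"
  using act_adams_eq_sum[OF order.refl assms(1), of n f] act_adams_1[OF assms] by simp

lemma bd_act_euler_e:
  assumes r: "r \<ge> 2" and k: "k \<in> {1..r}"
  shows "bd n r (act n r (euler_e r k) h) =
    (if k = 1 then (\<lambda>_. 0) else act n (r - 1) (euler_e (r - 1) (k - 1)) (bd n r h))"
proof
  fix v
  have r1: "r \<ge> 1" "r - 1 \<ge> 1" using r by auto
  let ?b = "\<lambda>j. if 2 \<le> j then act n (r - 1) (euler_e (r - 1) (j - 1)) (bd n r h) v else 0"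
  have "bd n r (act n r (euler_e r k) h) v = ?b k"
  proof (rule coeffs_eq_if_power_sums_eq[OF _ k])
    fix m :: nat assume m: "m \<ge> 1"
    have "bd n r (act n r (adams r m) h) v = of_nat m * act n (r - 1) (adams (r - 1) m) (bd n r h) v"
      unfolding bd_act_adams[OF r m] ..
    then have "(\<Sum>j=1..r. of_nat m ^ j * bd n r (act n r (euler_e r j) h) v) =
        of_nat m * (\<Sum>j=1..r-1. of_nat m ^ j * act n (r - 1) (euler_e (r - 1) j) (bd n r h) v)"
      unfolding act_adams_eq_sum[OF m r1(1)] act_adams_eq_sum[OF m r1(2)] bd_lincomb[OF finite_atLeastAtMost] .
    also have "\<dots> = (\<Sum>j=1..r-1. of_nat m ^ Suc j * act n (r - 1) (euler_e (r - 1) j) (bd n r h) v)"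
      by (simp add: sum_distrib_left mult.assoc)
    also have "\<dots> = (\<Sum>j=2..r. of_nat m ^ j * act n (r - 1) (euler_e (r - 1) (j - 1)) (bd n r h) v)"
    proof -
      have "{2..r} = {Suc 1..Suc (r - 1)}" using r by simp
      then show ?thesis by (simp only: sum.shift_bounds_cl_Suc_ivl) simp
    qed
    also have "\<dots> = (\<Sum>j=1..r. of_nat m ^ j * ?b j)"
    proof -
      have "{1..r} = insert 1 {2..r}" using r by auto
      then show ?thesis by simp
    qed
    finally show "(\<Sum>j=1..r. of_nat m ^ j * bd n r (act n r (euler_e r j) h) v) = (\<Sum>j=1..r. of_nat m ^ j * ?b j)" .
  qed
  then show "bd n r (act n r (euler_e r k) h) v =
      (if k = 1 then (\<lambda>_. 0) else act n (r - 1) (euler_e (r - 1) (k - 1)) (bd n r h)) v"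
    using k by auto
qed

lemma Mk_eq_range:
  assumes k: "k \<ge> 1"
  shows "Mk n r k = range (act n r (euler_e r k))"
proof -
  let ?SS = "{S. S \<subseteq> {1..n} \<and> card S = r}"
  have fin: "finite ?SS" by (rule finite_subset[of _ "Pow {1..n}"]) auto
  have "act n r (euler_e r k) h \<in> Mk n r k" for h
  proof -
    define g where "g = (\<lambda>S. act n r (euler_e r k) (\<lambda>w. if distinct w \<and> set w = S then h w else 0))"
    have "\<forall>S. S \<subseteq> {1..n} \<and> card S = r \<longrightarrow> g S \<in> MSk n r k S"
      unfolding g_def MSk_def MS_def by auto
    moreover have "act n r (euler_e r k) h = (\<lambda>v. \<Sum>S\<in>?SS. g S v)"
    proof -
      have "act n r (euler_e r k) h =
          act n r (euler_e r k) (\<lambda>v. \<Sum>S\<in>?SS. if distinct v \<and> set v = S then h v else 0)"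
      proof (rule act_cong)
        fix w assume w: "w \<in> inj_words n r"
        then have "set w \<in> ?SS" "distinct w" by (auto simp: inj_words_def distinct_card)
        then show "h w = (\<Sum>S\<in>?SS. if distinct w \<and> set w = S then h w else 0)" using fin by simp
      qed
      also have "\<dots> = (\<lambda>v. \<Sum>S\<in>?SS. g S v)" unfolding g_def by (rule act_sum[OF fin])
      finally show ?thesis .
    qed
    ultimately show ?thesis using k by (auto simp: Mk_def)
  qed
  moreover have "f \<in> range (act n r (euler_e r k))" if f: "f \<in> Mk n r k" for f
  proof -
    obtain g where g: "\<forall>S. S \<subseteq> {1..n} \<and> card S = r \<longrightarrow> g S \<in> MSk n r k S"
      and fg: "f = (\<lambda>v. \<Sum>S\<in>?SS. g S v)"
      using f k by (auto simp: Mk_def)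
    have "\<forall>S\<in>?SS. \<exists>h. g S = act n r (euler_e r k) h" using g by (auto simp: MSk_def)
    then obtain H where H: "\<forall>S\<in>?SS. g S = act n r (euler_e r k) (H S)" by metis
    have "f = (\<lambda>v. \<Sum>S\<in>?SS. act n r (euler_e r k) (H S) v)" unfolding fg using H by (intro ext sum.cong) auto
    also have "\<dots> = act n r (euler_e r k) (\<lambda>v. \<Sum>S\<in>?SS. H S v)" by (rule act_sum[OF fin, symmetric])
    finally show ?thesis by blast
  qed
  ultimately show ?thesis by blast
qed

lemma bd_Mk_subset:
  assumes r: "r \<ge> 2" and k: "k \<in> {1..r}"
  shows "bd n r ` Mk n r k \<subseteq> Mk n (r - 1) (k - 1)"
proof
  fix x assume "x \<in> bd n r ` Mk n r k"
  then obtain h where x: "x = bd n r (act n r (euler_e r k) h)"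
    using Mk_eq_range k by auto
  show "x \<in> Mk n (r - 1) (k - 1)"
  proof (cases "k = 1")
    case True
    then show ?thesis using x bd_act_euler_e[OF r k] by (simp add: Mk_def)
  next
    case False
    then show ?thesis using x bd_act_euler_e[OF r k] Mk_eq_range[of "k - 1"] k by auto
  qed
qed

lemma Mk_subset_M: "k \<ge> 1 \<Longrightarrow> Mk n r k \<subseteq> M n r"
  using Mk_eq_range act_in_M by auto

lemma M_eq_sum_Mk_unique:
  assumes r: "r \<ge> 1" and f: "f \<in> M n r"
  shows "\<exists>!g. (\<forall>k\<in>{1..r}. g k \<in> Mk n r k) \<and> (\<forall>k. k \<notin> {1..r} \<longrightarrow> g k = (\<lambda>_. 0)) \<and>
    f = (\<lambda>v. \<Sum>k=1..r. g k v)"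
proof (rule ex1I)
  let ?g = "\<lambda>k. if k \<in> {1..r} then act n r (euler_e r k) f else (\<lambda>_. 0)"
  have "(\<lambda>v. \<Sum>k=1..r. ?g k v) = (\<lambda>v. \<Sum>k=1..r. act n r (euler_e r k) f v)"
    by (intro ext sum.cong) auto
  then show "(\<forall>k\<in>{1..r}. ?g k \<in> Mk n r k) \<and> (\<forall>k. k \<notin> {1..r} \<longrightarrow> ?g k = (\<lambda>_. 0)) \<and>
      f = (\<lambda>v. \<Sum>k=1..r. ?g k v)"
    using Mk_eq_range sum_act_euler_e[OF r f] by auto
next
  fix g assume g: "(\<forall>k\<in>{1..r}. g k \<in> Mk n r k) \<and> (\<forall>k. k \<notin> {1..r} \<longrightarrow> g k = (\<lambda>_. 0)) \<and>
      f = (\<lambda>v. \<Sum>k=1..r. g k v)"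
  have "\<forall>k\<in>{1..r}. \<exists>h. g k = act n r (euler_e r k) h" using g Mk_eq_range by auto
  then obtain H where H: "\<forall>k\<in>{1..r}. g k = act n r (euler_e r k) (H k)" by metis
  have "g k = act n r (euler_e r k) f" if k: "k \<in> {1..r}" for k
  proof -
    have "act n r (euler_e r k) f = (\<lambda>v. \<Sum>j=1..r. act n r (euler_e r k) (g j) v)"
      using g act_sum[of "{1..r}" n r "euler_e r k" g] by simp
    also have "\<dots> = (\<lambda>v. \<Sum>j=1..r. if k = j then act n r (euler_e r j) (H j) v else 0)"
      using H act_euler_e_orthogonal[OF r k] by (intro ext sum.cong refl) auto
    finally show ?thesis using H k by simp
  qed
  then show "g = (\<lambda>k. if k \<in> {1..r} then act n r (euler_e r k) f else (\<lambda>_. 0))"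
    using g by auto
qed

theorem mainTheorem4:
  fixes n :: nat
  assumes "n \<ge> 1"
  shows "(\<forall>r k. 2 \<le> r \<and> r \<le> n \<and> 1 \<le> k \<and> k \<le> r \<longrightarrow>
            bd n r ` Mk n r k \<subseteq> Mk n (r - 1) (k - 1))
       \<and> (\<forall>r. 1 \<le> r \<and> r \<le> n \<longrightarrow>
            (\<forall>k\<in>{1..r}. Mk n r k \<subseteq> M n r) \<and>
            (\<forall>f\<in>M n r. \<exists>!g. (\<forall>k\<in>{1..r}. g k \<in> Mk n r k) \<and>
                            (\<forall>k. k \<notin> {1..r} \<longrightarrow> g k = (\<lambda>_. 0)) \<and>
                            f = (\<lambda>v. \<Sum>k=1..r. g k v)))"
proof (intro conjI allI impI ballI)
  fix r k assume "2 \<le> r \<and> r \<le> n \<and> 1 \<le> k \<and> k \<le> r"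
  then show "bd n r ` Mk n r k \<subseteq> Mk n (r - 1) (k - 1)" by (intro bd_Mk_subset) auto
next
  fix r k :: nat assume "k \<in> {1..r}"
  then show "Mk n r k \<subseteq> M n r" by (intro Mk_subset_M) simp
next
  fix r f assume "1 \<le> r \<and> r \<le> n" "f \<in> M n r"
  then show "\<exists>!g. (\<forall>k\<in>{1..r}. g k \<in> Mk n r k) \<and> (\<forall>k. k \<notin> {1..r} \<longrightarrow> g k = (\<lambda>_. 0)) \<and>
      f = (\<lambda>v. \<Sum>k=1..r. g k v)"
    by (intro M_eq_sum_Mk_unique) auto
qed

end
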